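(* Let $\phi_+:[0,\infty)\to[0,\infty)$ be increasing and $\phi_-:[0,\infty)\to(-\infty,0]$ be decreasing, and let $F:[0,\infty)\to\mathbb{R}$ be convex and increasing. Suppose $\Delta(l)=\int_0^l\big(\frac{1}{2\phi_+(m)}+\frac{1}{2|\phi_-(m)|}\big)dm$ is finite for each $l>0$ and $\Delta(l)\to\infty$ as $l\to\infty$. Let $\psi_+,\psi_-$ be the right-continuous inverses of $\phi_+,\phi_-$. Let $\nu$ be the probability measure on $[0,\infty)$ with $\bar\nu(l)=\nu([l,\infty))=e^{-\Delta(l)}$, and set $$\Sigma(l)=\frac{1}{\bar\nu(l)}\int_l^\infty F'(m)\,\nu(dm),\qquad \delta(l)=\Sigma(l)-F'(l)\ \text{(where $F'(l)$ exists)},$$ $$A_+(l)=\Sigma(0)+\int_0^l\frac{\delta(m)}{\phi_+(m)}dm,\quad A_-(l)=-\Sigma(0)-\int_0^l\frac{\delta(m)}{|\phi_-(m)|}dm,\quad C(l)=-F(0)+\int_0^l\delta(m)\,dm,$$ and $$H(x)=\begin{cases}\sup_{l>0}\{xA_+(l)-C(l)\},&x>0,\\ F(0),&x=0,\\ \sup_{l>0}\{xA_-(l)-C(l)\},&x<0.\end{cases}$$ Then: $H$ is convex; for $x>0$ the supremum is attained at $l=\psi_+(x)$ and for $x<0$ at $l=\psi_-(x)$; for every $l$, $H'(\phi_+(l-))\le A_+(l)\le H'(\phi_+(l+))$ and $H'(\phi_-(l+))\le A_-(l)\le H'(\phi_-(l-))$; and finally, writing $\Gamma_A(l)=\int_0^l\frac{A_+(m)-A_-(m)}{2}dm$,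 for all $l\ge0$ $$F(l)=\Gamma_A(l)+H(\phi_+(l))-\phi_+(l)A_+(l)=\Gamma_A(l)+H(\phi_-(l))-\phi_-(l)A_-(l).$$
   Context: $F'$ denotes the derivative of $F$, which exists almost everywhere. $\phi_\pm(l\pm)$ denote one-sided limits of $\phi_\pm$ at $l$; in the inequalities $H'(\phi_+(l-))\le A_+(l)\le H'(\phi_+(l+))$ and $H'(\phi_-(l+))\le A_-(l)\le H'(\phi_-(l-))$, the lower bound is the left derivative of the convex function $H$ at the indicated point and the upper bound is its right derivative (they are ordinary derivatives where $H$ is differentiable). *)

theory Defs
  imports "HOL-Analysis.Analysis" "HOL-Probability.Probability"
begin

definition rderiv :: "(real \<Rightarrow> real) \<Rightarrow> real \<Rightarrow> real" where
  "rderiv f x = Lim (at_right x) (\<lambda>y. (f y - f x) / (y - x))"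

text \<open>One-sided derivatives of an extended-real valued function
  (H may take the value +infinity).  Left derivative and right derivative.\<close>
definition ereal_left_deriv :: "(real \<Rightarrow> ereal) \<Rightarrow> real \<Rightarrow> ereal" where
  "ereal_left_deriv f x = Lim (at_left x) (\<lambda>y. (f x - f y) / ereal (x - y))"

definition ereal_right_deriv :: "(real \<Rightarrow> ereal) \<Rightarrow> real \<Rightarrow> ereal" where
  "ereal_right_deriv f x = Lim (at_right x) (\<lambda>y. (f y - f x) / ereal (y - x))"

definition ereal_convex_on :: "real set \<Rightarrow> (real \<Rightarrow> ereal) \<Rightarrow> bool" where
  "ereal_convex_on S f \<longleftrightarrow>
     (\<forall>x\<in>S. \<forall>y\<in>S. \<forall>t::real. 0 \<le> t \<and> t \<le> 1 \<longrightarrow>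
        f ((1 - t) * x + t * y) \<le> ereal (1 - t) * f x + ereal t * f y)"

end

theory Submission
  imports Defs
begin

text \<open>
  \<open>Delta\<close> is a time change: its density \<open>Delta' = 1/(2\<phi>\<^sub>+) + 1/(2|\<phi>\<^sub>-|)\<close> carries \<open>Delta' dm\<close> to
  Lebesgue measure, so \<open>\<nu>\<close> has density \<open>exp (- Delta) Delta'\<close> and
  \<open>\<Sigma>(l) = exp (Delta l) \<integral>\<^sub>l\<^sup>\<infinity> F' exp (- Delta) Delta'\<close>.  Tonelli's theorem then gives
  \<open>\<integral>\<^sub>0\<^sup>l (\<Sigma> - F') Delta' = \<Sigma>(l) - \<Sigma>(0)\<close>, i.e. \<open>A\<^sub>+ - A\<^sub>- = 2 \<Sigma>\<close>, which together with
  \<open>\<integral>\<^sub>0\<^sup>l F' = F(l) - F(0)\<close> is the identity \<open>F = \<Gamma>\<^sub>A - C\<close>.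

  Since \<open>\<delta> = \<Sigma> - F' \<ge> 0\<close>, the \<open>l\<close>-derivative \<open>\<delta>(l) (x - \<phi>\<^sub>+(l)) / \<phi>\<^sub>+(l)\<close> of \<open>x A\<^sub>+(l) - C(l)\<close>
  changes sign where \<open>\<phi>\<^sub>+\<close> crosses \<open>x\<close>, so the supremum defining \<open>H x\<close> is attained at
  \<open>\<psi>\<^sub>+(x)\<close>.  \<open>H\<close> is a supremum of affine functions, hence convex, and the line of slope
  \<open>A\<^sub>+(l)\<close> through the point of \<open>H\<close> above \<open>\<phi>\<^sub>+(l\<plusminus>)\<close> supports \<open>H\<close>, which bounds the one-sided
  derivatives there.  The branch \<open>x < 0\<close> is the mirror image under \<open>x \<mapsto> -x\<close>.
\<close>

section \<open>Right derivatives of convex functions\<close>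

lemma convex_on_secant_slopes_le:
  fixes F :: "real \<Rightarrow> real"
  assumes F: "convex_on I F" and I: "x \<in> I" "z \<in> I" and xyz: "x < y" "y < z"
  shows "(F y - F x) / (y - x) \<le> (F z - F x) / (z - x)"
    and "(F z - F x) / (z - x) \<le> (F z - F y) / (z - y)"
proof -
  have swap: "(F a - F b) / (a - b) = (F b - F a) / (b - a)" for a b
    by (metis minus_diff_eq minus_divide_divide)
  show "(F y - F x) / (y - x) \<le> (F z - F x) / (z - x)"
    using convex_on_slope_le(1)[OF F I xyz] by (simp add: swap)
  show "(F z - F x) / (z - x) \<le> (F z - F y) / (z - y)"
    using convex_on_slope_le(2)[OF F I xyz] by (simp add: swap)
qed

context
  fixes F :: "real \<Rightarrow> real"
  assumes convex_F: "convex_on {0..} F" and mono_F: "mono_on {0..} F"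
begin

lemma secant_slope_nonneg: "0 \<le> a \<Longrightarrow> a < b \<Longrightarrow> 0 \<le> (F b - F a) / (b - a)"
  using mono_F by (auto simp: mono_on_def)

lemma rderiv_eq_Inf_slopes:
  assumes "0 \<le> x"
  shows "rderiv F x = Inf ((\<lambda>y. (F y - F x) / (y - x)) ` {x<..})"
proof -
  let ?s = "\<lambda>y. (F y - F x) / (y - x)"
  have "(?s \<longlongrightarrow> Inf (?s ` ({x<..} \<inter> UNIV))) (at x within ({x<..} \<inter> UNIV))"
  proof (rule Lim_right_bound[where K = 0])
    show "?s a \<le> ?s b" if "x < a" "a \<le> b" for a b
      using convex_on_secant_slopes_le(1)[OF convex_F, of x b a] assms that
      by (cases "a = b") auto
    show "0 \<le> ?s a" if "x < a" for a
      using secant_slope_nonneg assms that .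
  qed
  then have "(?s \<longlongrightarrow> Inf (?s ` {x<..})) (at_right x)"
    by simp
  then show ?thesis
    unfolding rderiv_def by (intro tendsto_Lim) (auto simp: trivial_limit_at_right_real)
qed

lemma rderiv_nonneg:
  assumes "0 \<le> x"
  shows "0 \<le> rderiv F x"
  unfolding rderiv_eq_Inf_slopes[OF assms]
  by (rule cInf_greatest) (use assms secant_slope_nonneg in auto)

lemma rderiv_le_secant_slope:
  assumes "0 \<le> x" "x < y"
  shows "rderiv F x \<le> (F y - F x) / (y - x)"
  unfolding rderiv_eq_Inf_slopes[OF assms(1)]
  by (rule cInf_lower) (use assms secant_slope_nonneg in \<open>auto intro!: bdd_belowI2[where m = 0]\<close>)

lemma secant_slope_le_rderiv:
  assumes "0 \<le> x" "x < y"
  shows "(F y - F x) / (y - x) \<le> rderiv F y"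
  unfolding rderiv_eq_Inf_slopes[of y, OF order_trans[OF assms(1) less_imp_le[OF assms(2)]]]
  using assms by (intro cInf_greatest)
    (auto intro: order_trans[OF convex_on_secant_slopes_le[OF convex_F, of x _ y]])

lemma mono_on_rderiv: "mono_on {0..} (rderiv F)"
proof (rule mono_onI)
  fix x y :: real assume "x \<in> {0..}" "y \<in> {0..}" "x \<le> y"
  then show "rderiv F x \<le> rderiv F y"
    using rderiv_le_secant_slope[of x y] secant_slope_le_rderiv[of x y]
    by (cases "x = y") auto
qed

lemma rderiv_integrable_on: "0 \<le> a \<Longrightarrow> rderiv F integrable_on {a..b}"
  by (rule integrable_on_mono_on) (use mono_on_rderiv in \<open>auto simp: mono_on_def\<close>)

lemma rderiv_integral_error:
  assumes ab: "0 \<le> a" "a \<le> b"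
  shows "\<bar>(F b - F a) - integral {a..b} (rderiv F)\<bar> \<le> (rderiv F b - rderiv F a) * (b - a)"
proof (cases "a = b")
  case False
  then have "a < b"
    using ab by simp
  have "rderiv F a * (b - a) \<le> integral {a..b} (rderiv F)" "integral {a..b} (rderiv F) \<le> rderiv F b * (b - a)"
    using integral_le[of "\<lambda>_. rderiv F a" "{a..b}" "rderiv F"] integral_le[of "rderiv F" "{a..b}" "\<lambda>_. rderiv F b"]
      rderiv_integrable_on[OF ab(1)] mono_on_rderiv ab
    by (auto simp: mono_on_def mult.commute)
  moreover have "rderiv F a * (b - a) \<le> F b - F a" "F b - F a \<le> rderiv F b * (b - a)"
    using rderiv_le_secant_slope[OF ab(1) \<open>a < b\<close>] secant_slope_le_rderiv[OF ab(1) \<open>a < b\<close>] \<open>a < b\<close>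
    by (auto simp: field_simps)
  ultimately show ?thesis
    by (simp add: abs_le_iff algebra_simps)
qed simp

text \<open>On a grid of mesh \<open>h\<close> the errors of the previous lemma telescope to
  \<open>h (rderiv F l - rderiv F 0)\<close>, which vanishes as \<open>h \<rightarrow> 0\<close>.\<close>

lemma integral_rderiv:
  assumes l: "0 \<le> l"
  shows "integral {0..l} (rderiv F) = F l - F 0"
proof -
  let ?f = "rderiv F"
  define D where "D t = F t - F 0 - integral {0..t} ?f" for t
  have D_diff: "D b - D a = (F b - F a) - integral {a..b} ?f" if "0 \<le> a" "a \<le> b" for a b
    using Henstock_Kurzweil_Integration.integral_combine[of 0 a b ?f] that rderiv_integrable_on[of 0 b]
    unfolding D_def by simp
  have "\<bar>D l\<bar> \<le> (?f l - ?f 0) * l / real n" if n: "n \<ge> 1" for n :: nat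
  proof -
    define h where "h = l / n"
    have h: "0 \<le> h" using l n by (simp add: h_def)
    have "\<bar>D (real k * h)\<bar> \<le> (?f (real k * h) - ?f 0) * h" for k :: nat
    proof (induction k)
      case (Suc k)
      have "\<bar>D (real (Suc k) * h) - D (real k * h)\<bar>
          \<le> (?f (real (Suc k) * h) - ?f (real k * h)) * (real (Suc k) * h - real k * h)"
        using rderiv_integral_error[of "real k * h" "real (Suc k) * h"] D_diff[of "real k * h" "real (Suc k) * h"] h
        by (simp add: algebra_simps)
      then show ?case using Suc.IH by (simp add: algebra_simps abs_le_iff)
    qed (simp add: D_def)
    moreover have "real n * h = l" using n by (simp add: h_def)
    ultimately show ?thesis by (metis h_def times_divide_eq_right)
  qed
  then have "\<bar>D l\<bar> \<le> 0"
    by (intro LIMSEQ_le_const[OF lim_const_over_n]) blast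
  then show ?thesis by (simp add: D_def)
qed

end

section \<open>Suprema of affine functions and supporting lines\<close>

lemma convex_on_affine: "convex_on UNIV (\<lambda>x::real. x * a - c)"
  by (rule convex_onI) (auto simp: algebra_simps)

lemma convex_on_max:
  fixes f g :: "real \<Rightarrow> real"
  assumes "convex_on UNIV f" "convex_on UNIV g"
  shows "convex_on UNIV (\<lambda>x. max (f x) (g x))"
proof (rule convex_onI)
  fix t x y :: real assume t: "0 < t" "t < 1"
  have "max (f x) (g x) \<ge> f x" "max (f y) (g y) \<ge> f y"
       "max (f x) (g x) \<ge> g x" "max (f y) (g y) \<ge> g y"
    by simp_all
  then have "(1 - t) * f x + t * f y \<le> (1 - t) * max (f x) (g x) + t * max (f y) (g y)"
    "(1 - t) * g x + t * g y \<le> (1 - t) * max (f x) (g x) + t * max (f y) (g y)"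
    using t by (intro add_mono mult_left_mono; simp)+
  then show "max (f ((1 - t) *\<^sub>R x + t *\<^sub>R y)) (g ((1 - t) *\<^sub>R x + t *\<^sub>R y))
      \<le> (1 - t) * max (f x) (g x) + t * max (f y) (g y)"
    using convex_onD[OF assms(1), of t x y] convex_onD[OF assms(2), of t x y] t by auto
qed simp

lemma ereal_convex_on_SUP:
  fixes h :: "'i \<Rightarrow> real \<Rightarrow> real"
  assumes "\<And>i. i \<in> I \<Longrightarrow> convex_on UNIV (h i)"
  shows "ereal_convex_on UNIV (\<lambda>x. SUP i\<in>I. ereal (h i x))"
  unfolding ereal_convex_on_def
proof (intro ballI allI impI)
  fix x y t :: real assume t: "0 \<le> t \<and> t \<le> 1"
  show "(SUP i\<in>I. ereal (h i ((1 - t) * x + t * y)))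
      \<le> ereal (1 - t) * (SUP i\<in>I. ereal (h i x)) + ereal t * (SUP i\<in>I. ereal (h i y))"
  proof (rule SUP_least)
    fix i assume i: "i \<in> I"
    have "ereal (h i ((1 - t) * x + t * y)) \<le> ereal (1 - t) * ereal (h i x) + ereal t * ereal (h i y)"
      using convex_onD[OF assms[OF i], of t x y] t by simp
    also have "\<dots> \<le> ereal (1 - t) * (SUP i\<in>I. ereal (h i x)) + ereal t * (SUP i\<in>I. ereal (h i y))"
      using t i by (intro add_mono ereal_mult_left_mono SUP_upper) auto
    finally show "ereal (h i ((1 - t) * x + t * y))
        \<le> ereal (1 - t) * (SUP i\<in>I. ereal (h i x)) + ereal t * (SUP i\<in>I. ereal (h i y))" .
  qed
qed

lemma ereal_convex_on_slope_mono_right: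
  fixes H :: "real \<Rightarrow> ereal"
  assumes convex: "ereal_convex_on UNIV H" and Hy: "H y = ereal c"
    and ab: "y < a" "a \<le> b" and finite: "H a \<noteq> -\<infinity>" "H b \<noteq> -\<infinity>"
  shows "(H a - H y) / ereal (a - y) \<le> (H b - H y) / ereal (b - y)"
proof (cases "H b")
  case (real r2)
  define t where "t = (a - y) / (b - y)"
  have t: "0 \<le> t" "t \<le> 1" and "t * (b - y) = a - y"
    using ab by (auto simp: t_def field_simps)
  then have "a = (1 - t) * y + t * b"
    by (simp add: algebra_simps)
  then have "H a \<le> ereal (1 - t) * H y + ereal t * H b"
    using convex t unfolding ereal_convex_on_def by blast
  then have Ha: "H a \<le> ereal ((1 - t) * c + t * r2)"
    using Hy real by simp
  then obtain r1 where r1: "H a = ereal r1"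
    using finite(1) by (cases "H a") auto
  have "r1 - c \<le> t * (r2 - c)"
    using Ha r1 by (simp add: algebra_simps)
  then have "(r1 - c) / (a - y) \<le> (r2 - c) / (b - y)"
    using ab by (simp add: t_def field_simps)
  then show ?thesis
    using r1 real Hy ab by simp
qed (use Hy ab finite in simp_all)

lemma ereal_convex_on_slope_mono_left:
  fixes H :: "real \<Rightarrow> ereal"
  assumes convex: "ereal_convex_on UNIV H" and Hy: "H y = ereal c"
    and ab: "a \<le> b" "b < y" and finite: "H a \<noteq> -\<infinity>" "H b \<noteq> -\<infinity>"
  shows "(H y - H a) / ereal (y - a) \<le> (H y - H b) / ereal (y - b)"
proof (cases "H a")
  case (real r1)
  define t where "t = (b - a) / (y - a)"
  have t: "0 \<le> t" "t < 1" and "t * (y - a) = b - a"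
    using ab by (auto simp: t_def field_simps)
  then have b_eq: "b = (1 - t) * a + t * y"
    by (simp add: algebra_simps)
  then have "H b \<le> ereal (1 - t) * H a + ereal t * H y"
    using convex t unfolding ereal_convex_on_def by (metis UNIV_I less_imp_le)
  then have Hb: "H b \<le> ereal ((1 - t) * r1 + t * c)"
    using Hy real by simp
  then obtain r2 where r2: "H b = ereal r2"
    using finite(2) by (cases "H b") auto
  have "(1 - t) * (c - r1) \<le> c - r2" and yb: "y - b = (1 - t) * (y - a)"
    using Hb r2 b_eq by (simp_all add: algebra_simps)
  then have "(c - r1) / (y - a) = ((1 - t) * (c - r1)) / (y - b)"
    using t by simp
  also have "\<dots> \<le> (c - r2) / (y - b)"
    using \<open>(1 - t) * (c - r1) \<le> c - r2\<close> ab by (intro divide_right_mono) auto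
  finally show ?thesis
    using r2 real Hy ab by simp
qed (use Hy ab finite in simp_all)

lemma supporting_slope_le_ereal_right_deriv:
  fixes H :: "real \<Rightarrow> ereal"
  assumes convex: "ereal_convex_on UNIV H" and Hy: "H y = ereal (y * A - b)"
    and support: "\<And>z. y < z \<Longrightarrow> ereal (z * A - b) \<le> H z"
  shows "ereal A \<le> ereal_right_deriv H y"
proof -
  let ?q = "\<lambda>z. (H z - H y) / ereal (z - y)"
  have A_le_q: "ereal A \<le> ?q z" if z: "y < z" for z
  proof (cases "H z")
    case (real r)
    then have "A \<le> (r - (y * A - b)) / (z - y)"
      using support[OF z] z by (simp add: field_simps)
    then show ?thesis
      using real Hy z by simp
  qed (use Hy support[OF z] z in simp_all)
  have finite: "H z \<noteq> -\<infinity>" if "y < z" for z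
    using support[OF that] by auto
  have "(?q \<longlongrightarrow> Inf (?q ` ({y<..} \<inter> UNIV))) (at y within ({y<..} \<inter> UNIV))"
    by (rule Lim_right_bound[where K = "ereal A"])
      (use ereal_convex_on_slope_mono_right[OF convex Hy] finite A_le_q in auto)
  then have "ereal_right_deriv H y = Inf (?q ` {y<..})"
    unfolding ereal_right_deriv_def by (intro tendsto_Lim) (auto simp: trivial_limit_at_right_real)
  also have "ereal A \<le> Inf (?q ` {y<..})"
    using A_le_q by (auto intro: Inf_greatest)
  finally show ?thesis .
qed

lemma ereal_left_deriv_le_supporting_slope:
  fixes H :: "real \<Rightarrow> ereal"
  assumes convex: "ereal_convex_on UNIV H" and Hy: "H y = ereal (y * A - b)"
    and support: "\<And>z. z < y \<Longrightarrow> ereal (z * A - b) \<le> H z"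
  shows "ereal_left_deriv H y \<le> ereal A"
proof -
  let ?q = "\<lambda>z. (H y - H z) / ereal (y - z)"
  have q_le_A: "?q z \<le> ereal A" if z: "z < y" for z
  proof (cases "H z")
    case (real r)
    then have "(y * A - b - r) / (y - z) \<le> A"
      using support[OF z] z by (simp add: field_simps)
    then show ?thesis
      using real Hy z by simp
  qed (use Hy support[OF z] z in simp_all)
  have finite: "H z \<noteq> -\<infinity>" if "z < y" for z
    using support[OF that] by auto
  have "(?q \<longlongrightarrow> Sup (?q ` ({..<y} \<inter> UNIV))) (at y within ({..<y} \<inter> UNIV))"
    by (rule Lim_left_bound[where K = "ereal A"])
      (use ereal_convex_on_slope_mono_left[OF convex Hy] finite q_le_A in auto)
  then have "ereal_left_deriv H y = Sup (?q ` {..<y})"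
    unfolding ereal_left_deriv_def by (intro tendsto_Lim) (auto simp: trivial_limit_at_left_real)
  also have "Sup (?q ` {..<y}) \<le> ereal A"
    using q_le_A by (auto intro: Sup_least)
  finally show ?thesis .
qed

section \<open>Monotone functions on \<open>[0, \<infinity>)\<close>\<close>

lemma mono_on_at_right_limit:
  fixes f :: "real \<Rightarrow> real"
  assumes mono: "mono_on {0..} f" and l: "0 \<le> l"
  obtains y where "(f \<longlongrightarrow> y) (at_right l)"
    and "\<And>m. 0 \<le> m \<Longrightarrow> m \<le> l \<Longrightarrow> f m \<le> y" and "\<And>m. l < m \<Longrightarrow> y \<le> f m"
proof
  have f_le: "f a \<le> f b" if "0 \<le> a" "a \<le> b" for a b
    using mono that by (auto simp: mono_on_def)
  have bdd: "bdd_below (f ` {l<..})"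
    by (rule bdd_belowI[of _ "f l"]) (use f_le l in auto)
  have "(f \<longlongrightarrow> Inf (f ` ({l<..} \<inter> {0..}))) (at l within ({l<..} \<inter> {0..}))"
    by (rule Lim_right_bound[where K = "f l"]) (use f_le l in auto)
  moreover have "{l<..} \<inter> {0..} = {l<..}" using l by auto
  ultimately show "(f \<longlongrightarrow> Inf (f ` {l<..})) (at_right l)"
    by simp
  show "f m \<le> Inf (f ` {l<..})" if "0 \<le> m" "m \<le> l" for m
    using that by (intro cInf_greatest) (auto intro: f_le)
  show "Inf (f ` {l<..}) \<le> f m" if "l < m" for m
    using that by (intro cInf_lower[OF _ bdd]) auto
qed

lemma mono_on_at_left_limit:
  fixes f :: "real \<Rightarrow> real"
  assumes mono: "mono_on {0..} f" and l: "0 < l"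
  obtains y where "(f \<longlongrightarrow> y) (at_left l)"
    and "\<And>m. 0 \<le> m \<Longrightarrow> m < l \<Longrightarrow> f m \<le> y" and "\<And>m. l \<le> m \<Longrightarrow> y \<le> f m"
proof
  let ?I = "{..<l} \<inter> {0..}"
  have f_le: "f a \<le> f b" if "0 \<le> a" "a \<le> b" for a b
    using mono that by (auto simp: mono_on_def)
  have bdd: "bdd_above (f ` ?I)"
    by (rule bdd_aboveI[of _ "f l"]) (use f_le in auto)
  have "(f \<longlongrightarrow> Sup (f ` ?I)) (at l within ?I)"
    by (rule Lim_left_bound[where K = "f l"]) (use f_le in auto)
  moreover have "at l within ?I = at_left l"
    by (rule at_within_nhd[where S = "{0<..}"]) (use l in auto)
  ultimately show "(f \<longlongrightarrow> Sup (f ` ?I)) (at_left l)"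
    by simp
  show "f m \<le> Sup (f ` ?I)" if "0 \<le> m" "m < l" for m
    using that by (intro cSup_upper[OF _ bdd]) auto
  show "Sup (f ` ?I) \<le> f m" if "l \<le> m" for m
    using that l by (intro cSup_least) (auto intro: f_le)
qed

lemma mono_on_threshold_Inf:
  fixes f :: "real \<Rightarrow> real"
  assumes mono: "mono_on {0..} f" and up: "\<And>a b. P a \<Longrightarrow> a \<le> b \<Longrightarrow> P b"
    and ex: "\<exists>l\<ge>0. P (f l)"
  defines "l0 \<equiv> Inf {l. 0 \<le> l \<and> P (f l)}"
  shows "0 \<le> l0" and "\<And>m. 0 \<le> m \<Longrightarrow> m < l0 \<Longrightarrow> \<not> P (f m)" and "\<And>m. l0 < m \<Longrightarrow> P (f m)"
proof -
  let ?S = "{l. 0 \<le> l \<and> P (f l)}"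
  have ne: "?S \<noteq> {}" and bdd: "bdd_below ?S"
    using ex by (auto intro: bdd_belowI[of _ 0])
  show "0 \<le> l0"
    unfolding l0_def by (rule cInf_greatest[OF ne]) auto
  show "\<not> P (f m)" if "0 \<le> m" "m < l0" for m
    using cInf_lower[OF _ bdd, of m] that unfolding l0_def by auto
  show "P (f m)" if "l0 < m" for m
  proof -
    have "Inf ?S < m"
      using that unfolding l0_def .
    then obtain l where l: "0 \<le> l" "P (f l)" "l < m"
      using cInf_lessD[OF ne] by auto
    moreover have "f l \<le> f m"
      using mono_onD[OF mono, of l m] l by simp
    ultimately show ?thesis
      using up by blast
  qed
qed

lemma borel_measurable_mono_on_max_0:
  fixes f :: "real \<Rightarrow> real"
  assumes "mono_on {0..} f"
  shows "(\<lambda>x. f (max x 0)) \<in> borel_measurable borel"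
  using assms by (intro borel_measurable_mono) (auto simp: mono_def mono_on_def)

section \<open>The transform \<open>H\<close>\<close>

lemma integrable_on_Icc_if_set_integrable:
  fixes f :: "real \<Rightarrow> real"
  assumes f: "\<And>l. set_integrable lborel {0..l} f" and a: "0 \<le> a"
  shows "f integrable_on {a..b}"
proof (cases "a \<le> b")
  case True
  have "f integrable_on {0..b}"
    using set_borel_integral_eq_integral(1)[OF f] .
  then show ?thesis
    by (rule integrable_subinterval_real) (use a True in auto)
qed (simp add: integrable_on_empty)

lemma set_integral_Icc_diff:
  fixes f :: "real \<Rightarrow> real"
  assumes f: "\<And>l. set_integrable lborel {0..l} f" and ab: "0 \<le> a" "a \<le> b"
  shows "(LINT m:{0..b}|lborel. f m) - (LINT m:{0..a}|lborel. f m) = integral {a..b} f"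
  using Henstock_Kurzweil_Integration.integral_combine[of 0 a b f] ab
    set_borel_integral_eq_integral[OF f] integrable_on_Icc_if_set_integrable[OF f, of 0 b]
  by simp

lemma set_integral_Icc_tendsto_0:
  fixes f :: "real \<Rightarrow> real"
  assumes f: "\<And>l. set_integrable lborel {0..l} f"
  shows "((\<lambda>l. LINT m:{0..l}|lborel. f m) \<longlongrightarrow> 0) (at_right 0)"
proof -
  have "continuous_on {0..1} (\<lambda>l. integral {0..l} f)"
    by (intro indefinite_integral_continuous_1 integrable_on_Icc_if_set_integrable[OF f]) simp
  then have "((\<lambda>l. integral {0..l} f) \<longlongrightarrow> 0) (at_right 0)"
    by (auto simp: continuous_on_def at_within_Icc_at_right dest!: bspec[of _ _ 0])
  then show ?thesis
    by (simp add: set_borel_integral_eq_integral(2)[OF f])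
qed

lemma integral_le_open_interval:
  fixes f g :: "real \<Rightarrow> real"
  assumes "f integrable_on {a..b}" "g integrable_on {a..b}" "\<And>u. a < u \<Longrightarrow> u < b \<Longrightarrow> f u \<le> g u"
  shows "integral {a..b} f \<le> integral {a..b} g"
  using integral_le[of f "{a<..<b}" g] assms
  by (simp add: integrable_on_open_interval_real integral_open_interval_real)

lemma SUP_greaterThan_eq_SUP_atLeast:
  fixes f :: "real \<Rightarrow> real"
  assumes f: "(f \<longlongrightarrow> f a) (at_right a)"
  shows "(SUP l\<in>{a<..}. ereal (f l)) = (SUP l\<in>{a..}. ereal (f l))"
proof (rule antisym)
  show "(SUP l\<in>{a<..}. ereal (f l)) \<le> (SUP l\<in>{a..}. ereal (f l))"
    by (rule SUP_subset_mono) auto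
  have "ereal (f a) \<le> (SUP l\<in>{a<..}. ereal (f l))"
  proof (rule tendsto_upperbound)
    show "((\<lambda>l. ereal (f l)) \<longlongrightarrow> ereal (f a)) (at_right a)"
      using f by (rule tendsto_ereal)
    show "\<forall>\<^sub>F l in at_right a. ereal (f l) \<le> (SUP l\<in>{a<..}. ereal (f l))"
      unfolding eventually_at_right_field by (intro exI[of _ "a + 1"]) (auto intro: SUP_upper)
  qed (simp add: trivial_limit_at_right_real)
  then show "(SUP l\<in>{a..}. ereal (f l)) \<le> (SUP l\<in>{a<..}. ereal (f l))"
    by (intro SUP_least) (metis SUP_upper atLeast_iff greaterThan_iff order_le_less)
qed

text \<open>Only \<open>\<delta> \<ge> 0\<close> and local integrability matter here; later \<open>\<delta>\<close> is \<open>\<Sigma> - F'\<close>,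
  \<open>s0 = \<Sigma>(0)\<close> and \<open>F0 = F(0)\<close>.\<close>

locale legendre_data =
  fixes \<phi>p \<phi>m \<delta> :: "real \<Rightarrow> real" and s0 F0 :: real
  assumes mono_\<phi>p: "mono_on {0..} \<phi>p" and antimono_\<phi>m: "antimono_on {0..} \<phi>m"
    and \<phi>p_nonneg: "\<And>l. 0 \<le> l \<Longrightarrow> 0 \<le> \<phi>p l" and \<phi>m_nonpos: "\<And>l. 0 \<le> l \<Longrightarrow> \<phi>m l \<le> 0"
    and \<phi>p_pos: "\<And>l. 0 < l \<Longrightarrow> 0 < \<phi>p l" and \<phi>m_neg: "\<And>l. 0 < l \<Longrightarrow> \<phi>m l < 0"
    and \<delta>_nonneg: "\<And>l. 0 \<le> l \<Longrightarrow> 0 \<le> \<delta> l" and s0_nonneg: "0 \<le> s0"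
    and set_integrable_\<delta>_\<phi>p: "\<And>l. set_integrable lborel {0..l} (\<lambda>m. \<delta> m / \<phi>p m)"
    and set_integrable_\<delta>_\<phi>m: "\<And>l. set_integrable lborel {0..l} (\<lambda>m. \<delta> m / \<bar>\<phi>m m\<bar>)"
    and set_integrable_\<delta>: "\<And>l. set_integrable lborel {0..l} \<delta>"
begin

definition Ap :: "real \<Rightarrow> real" where
  "Ap l = s0 + (\<integral>m\<in>{0..l}. \<delta> m / \<phi>p m \<partial>lborel)"

definition Am :: "real \<Rightarrow> real" where
  "Am l = - s0 - (\<integral>m\<in>{0..l}. \<delta> m / \<bar>\<phi>m m\<bar> \<partial>lborel)"

definition C :: "real \<Rightarrow> real" where
  "C l = - F0 + (\<integral>m\<in>{0..l}. \<delta> m \<partial>lborel)"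

definition H :: "real \<Rightarrow> ereal" where
  "H x = (if x > 0 then (SUP l\<in>{0<..}. ereal (x * Ap l - C l))
          else if x = 0 then ereal F0
          else (SUP l\<in>{0<..}. ereal (x * Am l - C l)))"

lemma Ap_diff: "0 \<le> a \<Longrightarrow> a \<le> b \<Longrightarrow> Ap b - Ap a = integral {a..b} (\<lambda>m. \<delta> m / \<phi>p m)"
  using set_integral_Icc_diff[OF set_integrable_\<delta>_\<phi>p, of a b] by (simp add: Ap_def)

lemma Am_diff: "0 \<le> a \<Longrightarrow> a \<le> b \<Longrightarrow> Am b - Am a = - integral {a..b} (\<lambda>m. \<delta> m / \<bar>\<phi>m m\<bar>)"
  using set_integral_Icc_diff[OF set_integrable_\<delta>_\<phi>m, of a b] by (simp add: Am_def)

lemma C_diff: "0 \<le> a \<Longrightarrow> a \<le> b \<Longrightarrow> C b - C a = integral {a..b} \<delta>"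
  using set_integral_Icc_diff[OF set_integrable_\<delta>, of a b] by (simp add: C_def)

lemma Ap_0: "Ap 0 = s0" and Am_0: "Am 0 = - s0" and C_0: "C 0 = - F0"
  using set_borel_integral_eq_integral(2)[OF set_integrable_\<delta>_\<phi>p[of 0]]
    set_borel_integral_eq_integral(2)[OF set_integrable_\<delta>_\<phi>m[of 0]]
    set_borel_integral_eq_integral(2)[OF set_integrable_\<delta>[of 0]]
  by (simp_all add: Ap_def Am_def C_def)

lemma Am_le_Ap:
  assumes "0 \<le> l"
  shows "Am l \<le> Ap l"
proof -
  have "0 \<le> integral {0..l} (\<lambda>m. \<delta> m / \<phi>p m)" "0 \<le> integral {0..l} (\<lambda>m. \<delta> m / \<bar>\<phi>m m\<bar>)"
    using integrable_on_Icc_if_set_integrable[OF set_integrable_\<delta>_\<phi>p, of 0 l]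
      integrable_on_Icc_if_set_integrable[OF set_integrable_\<delta>_\<phi>m, of 0 l]
    by (auto intro!: integral_nonneg divide_nonneg_nonneg \<delta>_nonneg \<phi>p_nonneg)
  then show ?thesis
    using Ap_diff[OF order_refl assms] Am_diff[OF order_refl assms] Ap_0 Am_0 s0_nonneg by simp
qed

lemma C_ge:
  assumes "0 \<le> l"
  shows "- F0 \<le> C l"
proof -
  have "0 \<le> integral {0..l} \<delta>"
    using integrable_on_Icc_if_set_integrable[OF set_integrable_\<delta>, of 0 l]
    by (auto intro!: integral_nonneg \<delta>_nonneg)
  then show ?thesis
    using C_diff[OF order_refl assms] C_0 by simp
qed

lemma objective_integrable:
  assumes "0 \<le> a"
  shows "(\<lambda>u. x * (\<delta> u / \<phi>p u) - \<delta> u) integrable_on {a..b}"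
  using integrable_on_Icc_if_set_integrable[OF set_integrable_\<delta>_\<phi>p assms]
    integrable_on_Icc_if_set_integrable[OF set_integrable_\<delta> assms]
  by (intro integrable_diff integrable_on_cmult_left[where 'b = real, simplified])

lemma objective_diff:
  assumes "0 \<le> a" "a \<le> b"
  shows "(x * Ap b - C b) - (x * Ap a - C a) = integral {a..b} (\<lambda>u. x * (\<delta> u / \<phi>p u) - \<delta> u)"
proof -
  have "integral {a..b} (\<lambda>u. x * (\<delta> u / \<phi>p u) - \<delta> u)
      = integral {a..b} (\<lambda>u. x * (\<delta> u / \<phi>p u)) - integral {a..b} \<delta>"
    using integrable_on_Icc_if_set_integrable[OF set_integrable_\<delta>_\<phi>p assms(1)]
      integrable_on_Icc_if_set_integrable[OF set_integrable_\<delta> assms(1)]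
    by (intro integral_diff integrable_on_cmult_left[where 'b = real, simplified])
  also have "\<dots> = x * (Ap b - Ap a) - (C b - C a)"
    using Ap_diff[OF assms] C_diff[OF assms] by (simp only: integral_mult_right)
  finally show ?thesis
    by (simp add: algebra_simps)
qed

text \<open>The \<open>l\<close>-derivative of \<open>x Ap l - C l\<close> is \<open>\<delta> l (x - \<phi>p l) / \<phi>p l\<close>, so the objective
  increases while \<open>\<phi>p \<le> x\<close> and decreases once \<open>\<phi>p \<ge> x\<close>.\<close>

lemma objective_mono:
  assumes ab: "0 \<le> a" "a \<le> b" and below: "\<And>u. a < u \<Longrightarrow> u < b \<Longrightarrow> \<phi>p u \<le> x"
  shows "x * Ap a - C a \<le> x * Ap b - C b"
proof -
  have "integral {a..b} (\<lambda>_. 0) \<le> integral {a..b} (\<lambda>u. x * (\<delta> u / \<phi>p u) - \<delta> u)"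
  proof (rule integral_le_open_interval)
    fix u assume u: "a < u" "u < b"
    then have "0 < \<phi>p u" "0 \<le> \<delta> u" using ab by (auto intro: \<phi>p_pos \<delta>_nonneg)
    moreover have "x * (\<delta> u / \<phi>p u) - \<delta> u = \<delta> u * (x - \<phi>p u) / \<phi>p u"
      using \<open>0 < \<phi>p u\<close> by (simp add: field_simps)
    ultimately show "0 \<le> x * (\<delta> u / \<phi>p u) - \<delta> u"
      using below[OF u] by simp
  qed (use objective_integrable ab in auto)
  then show ?thesis
    using objective_diff[OF ab, of x] by simp
qed

lemma objective_antimono:
  assumes ab: "0 \<le> a" "a \<le> b" and above: "\<And>u. a < u \<Longrightarrow> u < b \<Longrightarrow> x \<le> \<phi>p u"
  shows "x * Ap b - C b \<le> x * Ap a - C a"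
proof -
  have "integral {a..b} (\<lambda>u. x * (\<delta> u / \<phi>p u) - \<delta> u) \<le> integral {a..b} (\<lambda>_. 0)"
  proof (rule integral_le_open_interval)
    fix u assume u: "a < u" "u < b"
    then have "0 < \<phi>p u" "0 \<le> \<delta> u" using ab by (auto intro: \<phi>p_pos \<delta>_nonneg)
    moreover have "x * (\<delta> u / \<phi>p u) - \<delta> u = \<delta> u * (x - \<phi>p u) / \<phi>p u"
      using \<open>0 < \<phi>p u\<close> by (simp add: field_simps)
    ultimately show "x * (\<delta> u / \<phi>p u) - \<delta> u \<le> 0"
      using above[OF u] by (simp add: divide_nonpos_pos mult_nonneg_nonpos)
  qed (use objective_integrable ab in auto)
  then show ?thesis
    using objective_diff[OF ab, of x] by simp
qed

lemma objective_le_at_threshold: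
  assumes l0: "0 \<le> l0" and below: "\<And>m. 0 \<le> m \<Longrightarrow> m < l0 \<Longrightarrow> \<phi>p m \<le> x"
    and above: "\<And>m. l0 < m \<Longrightarrow> x \<le> \<phi>p m" and l: "0 \<le> l"
  shows "x * Ap l - C l \<le> x * Ap l0 - C l0"
proof (cases "l \<le> l0")
  case True
  then show ?thesis
    using l below by (intro objective_mono) auto
next
  case False
  then show ?thesis
    using l0 above by (intro objective_antimono) auto
qed

lemma Ap_tendsto_0: "(Ap \<longlongrightarrow> Ap 0) (at_right 0)"
  using tendsto_add[OF tendsto_const set_integral_Icc_tendsto_0[OF set_integrable_\<delta>_\<phi>p]]
  unfolding Ap_0 by (simp add: Ap_def[abs_def])

lemma Am_tendsto_0: "(Am \<longlongrightarrow> Am 0) (at_right 0)"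
  using tendsto_diff[OF tendsto_const set_integral_Icc_tendsto_0[OF set_integrable_\<delta>_\<phi>m]]
  unfolding Am_0 by (simp add: Am_def[abs_def])

lemma C_tendsto_0: "(C \<longlongrightarrow> C 0) (at_right 0)"
  using tendsto_add[OF tendsto_const[of "- F0"] set_integral_Icc_tendsto_0[OF set_integrable_\<delta>]]
  unfolding C_0 by (simp add: C_def[abs_def])

lemma H_eq_SUP_max: "H x = (SUP l\<in>{0..}. ereal (max (x * Ap l - C l) (x * Am l - C l)))"
proof (cases x "0 :: real" rule: linorder_cases)
  case less
  then have max_eq: "max (x * Ap l - C l) (x * Am l - C l) = x * Am l - C l" if "0 \<le> l" for l
    using mult_left_mono_neg[OF Am_le_Ap[OF that], of x] by simp
  have "H x = (SUP l\<in>{0..}. ereal (x * Am l - C l))"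
    using less SUP_greaterThan_eq_SUP_atLeast[of "\<lambda>l. x * Am l - C l"]
    by (simp add: H_def tendsto_intros Am_tendsto_0 C_tendsto_0)
  also have "\<dots> = (SUP l\<in>{0..}. ereal (max (x * Ap l - C l) (x * Am l - C l)))"
    using max_eq by (intro SUP_cong) (simp_all del: ereal_max)
  finally show ?thesis .
next
  case equal
  have "(SUP l\<in>{0..}. ereal (- C l)) = ereal F0"
    using C_0 by (intro antisym SUP_least SUP_upper2[of 0]) (auto dest: C_ge)
  then show ?thesis
    using equal by (simp add: H_def)
next
  case greater
  then have max_eq: "max (x * Ap l - C l) (x * Am l - C l) = x * Ap l - C l" if "0 \<le> l" for l
    using mult_left_mono[OF Am_le_Ap[OF that], of x] by simp
  have "H x = (SUP l\<in>{0..}. ereal (x * Ap l - C l))"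
    using greater SUP_greaterThan_eq_SUP_atLeast[of "\<lambda>l. x * Ap l - C l"]
    by (simp add: H_def tendsto_intros Ap_tendsto_0 C_tendsto_0)
  also have "\<dots> = (SUP l\<in>{0..}. ereal (max (x * Ap l - C l) (x * Am l - C l)))"
    using max_eq by (intro SUP_cong) (simp_all del: ereal_max)
  finally show ?thesis .
qed

lemma ereal_convex_H: "ereal_convex_on UNIV H"
proof -
  have "H = (\<lambda>x. SUP l\<in>{0..}. ereal (max (x * Ap l - C l) (x * Am l - C l)))"
    using H_eq_SUP_max by blast
  then show ?thesis
    by (simp only:) (intro ereal_convex_on_SUP convex_on_max convex_on_affine)
qed

lemma affine_le_H: "0 \<le> l \<Longrightarrow> ereal (x * Ap l - C l) \<le> H x"
  unfolding H_eq_SUP_max by (rule SUP_upper2[of l]) auto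

lemma H_eq_at_threshold:
  assumes x: "0 \<le> x" and l0: "0 \<le> l0" and below: "\<And>m. 0 \<le> m \<Longrightarrow> m < l0 \<Longrightarrow> \<phi>p m \<le> x"
    and above: "\<And>m. l0 < m \<Longrightarrow> x \<le> \<phi>p m"
  shows "H x = ereal (x * Ap l0 - C l0)"
proof (rule antisym)
  show "H x \<le> ereal (x * Ap l0 - C l0)"
    unfolding H_eq_SUP_max
  proof (rule SUP_least)
    fix l :: real assume "l \<in> {0..}"
    then have "max (x * Ap l - C l) (x * Am l - C l) = x * Ap l - C l" "0 \<le> l"
      using mult_left_mono[OF Am_le_Ap x, of l] by auto
    then show "ereal (max (x * Ap l - C l) (x * Am l - C l)) \<le> ereal (x * Ap l0 - C l0)"
      using objective_le_at_threshold[OF l0 below above] by simp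
  qed
  show "ereal (x * Ap l0 - C l0) \<le> H x"
    by (rule affine_le_H[OF l0])
qed

lemma H_tendsto_at_top:
  assumes x: "0 \<le> x" and below: "\<And>l. 0 \<le> l \<Longrightarrow> \<phi>p l \<le> x"
  shows "((\<lambda>l. ereal (x * Ap l - C l)) \<longlongrightarrow> H x) at_top"
proof (rule increasing_tendsto)
  show "\<forall>\<^sub>F l in at_top. ereal (x * Ap l - C l) \<le> H x"
    using eventually_ge_at_top[of 0] by eventually_elim (rule affine_le_H)
  fix y assume "y < H x"
  then obtain l1 where l1: "0 \<le> l1" "y < ereal (max (x * Ap l1 - C l1) (x * Am l1 - C l1))"
    unfolding H_eq_SUP_max less_SUP_iff by auto
  then have "y < ereal (x * Ap l1 - C l1)"
    using mult_left_mono[OF Am_le_Ap x, of l1] by (simp add: max_absorb1)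
  moreover have "ereal (x * Ap l1 - C l1) \<le> ereal (x * Ap l - C l)" if "l1 \<le> l" for l
    using l1 that below by (simp only: ereal_less_eq) (intro objective_mono; auto)
  ultimately show "\<forall>\<^sub>F l in at_top. y < ereal (x * Ap l - C l)"
    by (intro eventually_mono[OF eventually_ge_at_top[of l1]]) (blast intro: less_le_trans)
qed

lemma H_at_\<phi>p: "0 \<le> l \<Longrightarrow> H (\<phi>p l) = ereal (\<phi>p l * Ap l - C l)"
  using mono_\<phi>p by (intro H_eq_at_threshold \<phi>p_nonneg) (auto simp: mono_on_def)

text \<open>The reflection \<open>x \<mapsto> -x\<close> exchanges the roles of \<open>\<phi>p\<close> and \<open>-\<phi>m\<close>, of \<open>Ap\<close> and \<open>-Am\<close>;
  the statements about the branch \<open>x < 0\<close> are obtained from those about \<open>x > 0\<close> this way.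
  The reflected instance is interpreted inside each proof only: a permanent interpretation of
  the locale in itself would be reflected again, indefinitely.\<close>

lemma legendre_data_reflect: "legendre_data (\<lambda>l. - \<phi>m l) (\<lambda>l. - \<phi>p l) \<delta> s0"
proof
  show "mono_on {0..} (\<lambda>l. - \<phi>m l)" "antimono_on {0..} (\<lambda>l. - \<phi>p l)"
    using mono_\<phi>p antimono_\<phi>m by (auto simp: monotone_on_def)
  show "set_integrable lborel {0..l} (\<lambda>m. \<delta> m / - \<phi>m m)" for l
  proof -
    have "set_integrable lborel {0..l} (\<lambda>m. \<delta> m / - \<phi>m m)
        \<longleftrightarrow> set_integrable lborel {0..l} (\<lambda>m. \<delta> m / \<bar>\<phi>m m\<bar>)"
      by (intro set_integrable_cong) (simp_all add: abs_of_nonpos \<phi>m_nonpos)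
    then show ?thesis
      using set_integrable_\<delta>_\<phi>m by simp
  qed
  show "set_integrable lborel {0..l} (\<lambda>m. \<delta> m / \<bar>- \<phi>p m\<bar>)" for l
  proof -
    have "set_integrable lborel {0..l} (\<lambda>m. \<delta> m / \<bar>- \<phi>p m\<bar>)
        \<longleftrightarrow> set_integrable lborel {0..l} (\<lambda>m. \<delta> m / \<phi>p m)"
      by (intro set_integrable_cong) (simp_all add: \<phi>p_nonneg)
    then show ?thesis
      using set_integrable_\<delta>_\<phi>p by simp
  qed
qed (simp_all add: \<phi>p_nonneg \<phi>m_nonpos \<phi>p_pos \<phi>m_neg \<delta>_nonneg s0_nonneg set_integrable_\<delta>)

lemma reflect_Ap: "legendre_data.Ap (\<lambda>l. - \<phi>m l) \<delta> s0 l = - Am l"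
proof -
  have "(\<integral>m\<in>{0..l}. \<delta> m / - \<phi>m m \<partial>lborel) = (\<integral>m\<in>{0..l}. \<delta> m / \<bar>\<phi>m m\<bar> \<partial>lborel)"
    by (intro set_lebesgue_integral_cong) (simp_all add: abs_of_nonpos \<phi>m_nonpos)
  then show ?thesis
    by (simp add: legendre_data.Ap_def[OF legendre_data_reflect] Am_def)
qed

lemma reflect_Am: "legendre_data.Am (\<lambda>l. - \<phi>p l) \<delta> s0 l = - Ap l"
proof -
  have "(\<integral>m\<in>{0..l}. \<delta> m / \<bar>- \<phi>p m\<bar> \<partial>lborel) = (\<integral>m\<in>{0..l}. \<delta> m / \<phi>p m \<partial>lborel)"
    by (intro set_lebesgue_integral_cong) (simp_all add: \<phi>p_nonneg)
  then show ?thesis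
    by (simp add: legendre_data.Am_def[OF legendre_data_reflect] Ap_def)
qed

lemma reflect_H: "legendre_data.H (\<lambda>l. - \<phi>m l) (\<lambda>l. - \<phi>p l) \<delta> s0 F0 x = H (- x)"
  by (cases x "0 :: real" rule: linorder_cases)
    (simp_all add: legendre_data.H_def[OF legendre_data_reflect] H_def reflect_Ap reflect_Am)

lemma affine_Am_le_H:
  assumes "0 \<le> l"
  shows "ereal (x * Am l - C l) \<le> H x"
proof -
  interpret reflect: legendre_data "\<lambda>l. - \<phi>m l" "\<lambda>l. - \<phi>p l" \<delta> s0 F0
    by (rule legendre_data_reflect)
  show ?thesis
    using reflect.affine_le_H[OF assms, of "- x"] by (simp add: reflect_Ap reflect_H)
qed

lemma H_eq_at_threshold_minus:
  assumes "x \<le> 0" "0 \<le> l0" "\<And>m. 0 \<le> m \<Longrightarrow> m < l0 \<Longrightarrow> x \<le> \<phi>m m"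
    and "\<And>m. l0 < m \<Longrightarrow> \<phi>m m \<le> x"
  shows "H x = ereal (x * Am l0 - C l0)"
proof -
  interpret reflect: legendre_data "\<lambda>l. - \<phi>m l" "\<lambda>l. - \<phi>p l" \<delta> s0 F0
    by (rule legendre_data_reflect)
  show ?thesis
    using reflect.H_eq_at_threshold[of "- x" l0] assms by (simp add: reflect_Ap reflect_H)
qed

lemma H_tendsto_at_top_minus:
  assumes "x \<le> 0" "\<And>l. 0 \<le> l \<Longrightarrow> x \<le> \<phi>m l"
  shows "((\<lambda>l. ereal (x * Am l - C l)) \<longlongrightarrow> H x) at_top"
proof -
  interpret reflect: legendre_data "\<lambda>l. - \<phi>m l" "\<lambda>l. - \<phi>p l" \<delta> s0 F0
    by (rule legendre_data_reflect)
  show ?thesis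
    using reflect.H_tendsto_at_top[of "- x"] assms by (simp add: reflect_Ap reflect_H)
qed

lemma H_at_\<phi>m: "0 \<le> l \<Longrightarrow> H (\<phi>m l) = ereal (\<phi>m l * Am l - C l)"
  using antimono_\<phi>m by (intro H_eq_at_threshold_minus \<phi>m_nonpos) (auto simp: monotone_on_def)

lemma H_eq_at_Inf_plus:
  assumes x: "0 \<le> x" and ex: "\<exists>l\<ge>0. x < \<phi>p l"
  shows "H x = ereal (x * Ap (Inf {l. 0 \<le> l \<and> x < \<phi>p l}) - C (Inf {l. 0 \<le> l \<and> x < \<phi>p l}))"
proof -
  note l0 = mono_on_threshold_Inf[OF mono_\<phi>p, of "\<lambda>v. x < v", OF _ ex]
  show ?thesis
  proof (rule H_eq_at_threshold[OF x])
    show "0 \<le> Inf {l. 0 \<le> l \<and> x < \<phi>p l}"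
      by (rule l0(1)) auto
    show "\<phi>p m \<le> x" if "0 \<le> m" "m < Inf {l. 0 \<le> l \<and> x < \<phi>p l}" for m
      using l0(2)[OF _ that] by (simp add: not_less)
    show "x \<le> \<phi>p m" if "Inf {l. 0 \<le> l \<and> x < \<phi>p l} < m" for m
      using l0(3)[OF _ that] by (simp add: less_imp_le)
  qed
qed

lemma H_eq_at_Inf_minus:
  assumes x: "x \<le> 0" and ex: "\<exists>l\<ge>0. \<phi>m l \<le> x"
  shows "H x = ereal (x * Am (Inf {l. 0 \<le> l \<and> \<phi>m l \<le> x}) - C (Inf {l. 0 \<le> l \<and> \<phi>m l \<le> x}))"
proof -
  have "mono_on {0..} (\<lambda>l. - \<phi>m l)"
    using antimono_\<phi>m by (auto simp: monotone_on_def)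
  note l0 = mono_on_threshold_Inf[OF this, of "\<lambda>v. - x \<le> v", simplified, OF ex]
  show ?thesis
  proof (rule H_eq_at_threshold_minus[OF x l0(1)])
    show "x \<le> \<phi>m m" if "0 \<le> m" "m < Inf {l. 0 \<le> l \<and> \<phi>m l \<le> x}" for m
      using l0(2)[OF that] by (simp add: not_le less_imp_le)
    show "\<phi>m m \<le> x" if "Inf {l. 0 \<le> l \<and> \<phi>m l \<le> x} < m" for m
      using l0(3)[OF that] .
  qed
qed

lemma H_at_Inf_or_tendsto_plus:
  assumes "0 < x"
  shows "if \<exists>l\<ge>0. x < \<phi>p l
    then H x = ereal (x * Ap (Inf {l. 0 \<le> l \<and> x < \<phi>p l}) - C (Inf {l. 0 \<le> l \<and> x < \<phi>p l}))
    else ((\<lambda>l. ereal (x * Ap l - C l)) \<longlongrightarrow> H x) at_top"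
proof (cases "\<exists>l\<ge>0. x < \<phi>p l")
  case True
  then show ?thesis
    unfolding if_P[OF True] using H_eq_at_Inf_plus[of x] assms by simp
next
  case False
  then have "\<phi>p l \<le> x" if "0 \<le> l" for l
    using that by (simp add: not_less)
  then show ?thesis
    unfolding if_not_P[OF False] using H_tendsto_at_top[of x] assms by simp
qed

lemma H_at_Inf_or_tendsto_minus:
  assumes "x < 0"
  shows "if \<exists>l\<ge>0. \<phi>m l \<le> x
    then H x = ereal (x * Am (Inf {l. 0 \<le> l \<and> \<phi>m l \<le> x}) - C (Inf {l. 0 \<le> l \<and> \<phi>m l \<le> x}))
    else ((\<lambda>l. ereal (x * Am l - C l)) \<longlongrightarrow> H x) at_top"
proof (cases "\<exists>l\<ge>0. \<phi>m l \<le> x")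
  case True
  then show ?thesis
    unfolding if_P[OF True] using H_eq_at_Inf_minus[of x] assms by simp
next
  case False
  then have "\<not> \<phi>m l \<le> x" if "0 \<le> l" for l
    using that by blast
  then show ?thesis
    unfolding if_not_P[OF False] using H_tendsto_at_top_minus[of x] assms by force
qed

lemma Ap_le_ereal_right_deriv_H:
  assumes l: "0 \<le> l"
  shows "ereal (Ap l) \<le> ereal_right_deriv H (Lim (at_right l) \<phi>p)"
proof -
  obtain y where lim: "(\<phi>p \<longlongrightarrow> y) (at_right l)"
    and below: "\<And>m. 0 \<le> m \<Longrightarrow> m \<le> l \<Longrightarrow> \<phi>p m \<le> y" and above: "\<And>m. l < m \<Longrightarrow> y \<le> \<phi>p m"
    using mono_on_at_right_limit[OF mono_\<phi>p l] by blast
  have "Lim (at_right l) \<phi>p = y"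
    using lim by (intro tendsto_Lim) (simp_all add: trivial_limit_at_right_real)
  moreover have "H y = ereal (y * Ap l - C l)"
    using below[of 0] \<phi>p_nonneg[of 0] l by (intro H_eq_at_threshold below above) auto
  ultimately show ?thesis
    using supporting_slope_le_ereal_right_deriv[OF ereal_convex_H _ affine_le_H[OF l]] by simp
qed

lemma ereal_left_deriv_H_le_Ap:
  assumes l: "0 < l"
  shows "ereal_left_deriv H (Lim (at_left l) \<phi>p) \<le> ereal (Ap l)"
proof -
  obtain y where lim: "(\<phi>p \<longlongrightarrow> y) (at_left l)"
    and below: "\<And>m. 0 \<le> m \<Longrightarrow> m < l \<Longrightarrow> \<phi>p m \<le> y" and above: "\<And>m. l \<le> m \<Longrightarrow> y \<le> \<phi>p m"
    using mono_on_at_left_limit[OF mono_\<phi>p l] by blast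
  have "Lim (at_left l) \<phi>p = y"
    using lim by (intro tendsto_Lim) (simp_all add: trivial_limit_at_left_real)
  moreover have "H y = ereal (y * Ap l - C l)"
    using below[of 0] \<phi>p_nonneg[of 0] l by (intro H_eq_at_threshold below above) auto
  ultimately show ?thesis
    using ereal_left_deriv_le_supporting_slope[OF ereal_convex_H _ affine_le_H] l by simp
qed

lemma ereal_left_deriv_H_le_Am:
  assumes l: "0 \<le> l"
  shows "ereal_left_deriv H (Lim (at_right l) \<phi>m) \<le> ereal (Am l)"
proof -
  have "mono_on {0..} (\<lambda>l. - \<phi>m l)"
    using antimono_\<phi>m by (auto simp: monotone_on_def)
  then obtain y where lim: "((\<lambda>l. - \<phi>m l) \<longlongrightarrow> y) (at_right l)"
    and below: "\<And>m. 0 \<le> m \<Longrightarrow> m \<le> l \<Longrightarrow> - \<phi>m m \<le> y" and above: "\<And>m. l < m \<Longrightarrow> y \<le> - \<phi>m m"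
    using mono_on_at_right_limit[OF _ l] by blast
  have "Lim (at_right l) \<phi>m = - y"
    using tendsto_minus[OF lim] by (intro tendsto_Lim) (simp_all add: trivial_limit_at_right_real)
  moreover have "H (- y) = ereal (- y * Am l - C l)"
  proof (rule H_eq_at_threshold_minus)
    show "- y \<le> 0" using below[of 0] \<phi>m_nonpos[of 0] l by simp
    show "- y \<le> \<phi>m m" if "0 \<le> m" "m < l" for m using below[of m] that by simp
    show "\<phi>m m \<le> - y" if "l < m" for m using above[OF that] by simp
  qed (use l in simp)
  ultimately show ?thesis
    using ereal_left_deriv_le_supporting_slope[OF ereal_convex_H _ affine_Am_le_H[OF l]] by simp
qed

lemma Am_le_ereal_right_deriv_H:
  assumes l: "0 < l"
  shows "ereal (Am l) \<le> ereal_right_deriv H (Lim (at_left l) \<phi>m)"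
proof -
  have "mono_on {0..} (\<lambda>l. - \<phi>m l)"
    using antimono_\<phi>m by (auto simp: monotone_on_def)
  then obtain y where lim: "((\<lambda>l. - \<phi>m l) \<longlongrightarrow> y) (at_left l)"
    and below: "\<And>m. 0 \<le> m \<Longrightarrow> m < l \<Longrightarrow> - \<phi>m m \<le> y" and above: "\<And>m. l \<le> m \<Longrightarrow> y \<le> - \<phi>m m"
    using mono_on_at_left_limit[OF _ l] by blast
  have "Lim (at_left l) \<phi>m = - y"
    using tendsto_minus[OF lim] by (intro tendsto_Lim) (simp_all add: trivial_limit_at_left_real)
  moreover have "H (- y) = ereal (- y * Am l - C l)"
  proof (rule H_eq_at_threshold_minus)
    show "- y \<le> 0" using below[of 0] \<phi>m_nonpos[of 0] l by simp
    show "- y \<le> \<phi>m m" if "0 \<le> m" "m < l" for m using below[OF that] by simp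
    show "\<phi>m m \<le> - y" if "l < m" for m using above[of m] that by simp
  qed (use l in simp)
  ultimately show ?thesis
    using supporting_slope_le_ereal_right_deriv[OF ereal_convex_H _ affine_Am_le_H] l by simp
qed

end

section \<open>The time change \<open>Delta\<close>\<close>

lemma nn_integral_Icc_eq_infinity:
  fixes c :: real
  assumes "0 < c" "\<And>m. m \<in> {0..c} \<Longrightarrow> f m = \<infinity>"
  shows "(\<integral>\<^sup>+ m \<in> {0..c}. f m \<partial>lborel) = \<infinity>"
proof -
  have "(\<integral>\<^sup>+ m \<in> {0..c}. f m \<partial>lborel) = (\<integral>\<^sup>+ m. \<infinity> * indicator {0..c} m \<partial>lborel)"
    using assms(2) by (intro nn_integral_cong) (auto split: split_indicator)
  also have "\<dots> = \<infinity> * emeasure lborel {0..c}"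
    by (rule nn_integral_cmult_indicator) (simp add: atLeastAtMost_borel)
  also have "\<dots> = \<infinity>"
    using assms(1) emeasure_lborel_Icc[of 0 c] by (simp add: ennreal_top_mult)
  finally show ?thesis .
qed

lemma measure_eqI_atLeast:
  fixes M N :: "real measure"
  assumes sets: "sets M = sets borel" "sets N = sets borel"
  assumes fin: "\<And>x. emeasure M {x ..} < \<infinity>"
  assumes "\<And>x. emeasure M {x ..} = emeasure N {x ..}"
  shows "M = N"
proof (rule measure_eqI_generator_eq_countable)
  let ?LT = "\<lambda>a::real. {a ..}" let ?E = "range ?LT"
  show "Int_stable ?E"
    by (auto simp: Int_stable_def intro: rev_image_eqI[of "max _ _"])
  show "?E \<subseteq> Pow UNIV" "sets M = sigma_sets UNIV ?E" "sets N = sigma_sets UNIV ?E"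
    unfolding sets borel_Ici by auto
  show "?LT`Rats \<subseteq> ?E" "\<And>a. a \<in> ?LT`Rats \<Longrightarrow> emeasure M a \<noteq> \<infinity>"
    using fin by (auto simp: less_top)
  show "(\<Union>i\<in>Rats. ?LT i) = UNIV"
  proof (intro set_eqI iffI)
    fix x :: real
    obtain q where "q \<in> \<rat>" "q < x"
      using Rats_no_bot_less by blast
    then show "x \<in> (\<Union>i\<in>Rats. ?LT i)"
      by (auto intro: less_imp_le)
  qed auto
qed (auto intro: assms countable_rat)

lemma nn_integral_exp_Icc:
  assumes "0 \<le> c"
  shows "(\<integral>\<^sup>+ t. ennreal (exp t) * indicator {0..c} t \<partial>lborel) = ennreal (exp c - 1)"
proof -
  have "(exp has_integral (exp c - exp 0)) {0..c}"
    using assms by (intro fundamental_theorem_of_calculus)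
      (auto intro!: derivative_eq_intros simp flip: has_real_derivative_iff_has_vector_derivative)
  then have "(\<integral>\<^sup>+ t. ennreal (indicator {0..c} t * exp t) \<partial>lborel) = ennreal (exp c - 1)"
    by (subst nn_integral_has_integral_lebesgue[where I = "exp c - 1"]) auto
  moreover have "ennreal (exp t) * indicator {0..c} t = ennreal (indicator {0..c} t * exp t)" for t
    by (simp add: indicator_def)
  ultimately show ?thesis
    by simp
qed

lemma nn_integral_exp_neg_Ici:
  "(\<integral>\<^sup>+ t. ennreal (exp (- t)) * indicator {c..} t \<partial>lborel) = ennreal (exp (- c))"
proof -
  have "((\<lambda>t::real. exp (- t)) \<longlongrightarrow> 0) at_top"
    using filterlim_compose[OF exp_at_bot filterlim_uminus_at_bot_at_top] by simp
  then have "(\<integral>\<^sup>+ t. ennreal (exp (- t)) * indicator {c..} t \<partial>lborel) = 0 - (- exp (- c))"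
    by (intro nn_integral_FTC_atLeast) (auto intro!: derivative_eq_intros tendsto_minus_cancel_left[THEN iffD1])
  then show ?thesis
    by simp
qed

locale phi_pair =
  fixes \<phi>p \<phi>m :: "real \<Rightarrow> real"
  assumes mono_\<phi>p: "mono_on {0..} \<phi>p" and \<phi>p_nonneg: "\<And>l. 0 \<le> l \<Longrightarrow> 0 \<le> \<phi>p l"
    and antimono_\<phi>m: "antimono_on {0..} \<phi>m" and \<phi>m_nonpos: "\<And>l. 0 \<le> l \<Longrightarrow> \<phi>m l \<le> 0"
    and Delta_finite: "\<And>l. 0 < l \<Longrightarrow> (\<integral>\<^sup>+ m \<in> {0..l}. (inverse (2 * ennreal (\<phi>p m))
                                  + inverse (2 * ennreal \<bar>\<phi>m m\<bar>)) \<partial>lborel) < \<infinity>"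
begin

definition Delta :: "real \<Rightarrow> real" where
  "Delta l = enn2real (\<integral>\<^sup>+ m \<in> {0..l}. (inverse (2 * ennreal (\<phi>p m))
                                  + inverse (2 * ennreal \<bar>\<phi>m m\<bar>)) \<partial>lborel)"

text \<open>The density of \<open>Delta\<close>, set to \<open>0\<close> on \<open>(-\<infinity>, 0]\<close> where \<open>\<phi>p\<close> and \<open>\<phi>m\<close> are unconstrained.\<close>

definition Delta' :: "real \<Rightarrow> real" where
  "Delta' m = (if 0 < m then inverse (2 * \<phi>p m) + inverse (2 * \<bar>\<phi>m m\<bar>) else 0)"

text \<open>Finiteness of \<open>Delta\<close> forces strict signs: a zero of \<open>\<phi>p\<close> or \<open>\<phi>m\<close> at \<open>c > 0\<close> would make
  the integrand defining \<open>Delta\<close> infinite on \<open>[0, c]\<close>.\<close>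

lemma \<phi>p_pos: "0 < c \<Longrightarrow> 0 < \<phi>p c" and \<phi>m_neg: "0 < c \<Longrightarrow> \<phi>m c < 0"
proof -
  let ?G = "\<lambda>m. inverse (2 * ennreal (\<phi>p m)) + inverse (2 * ennreal \<bar>\<phi>m m\<bar>)"
  assume c: "0 < c"
  have not_all_infinite: False if "\<And>m. m \<in> {0..c} \<Longrightarrow> ?G m = \<infinity>"
    using nn_integral_Icc_eq_infinity[OF c that] Delta_finite[OF c] by simp
  show "0 < \<phi>p c"
  proof (rule ccontr)
    assume "\<not> 0 < \<phi>p c"
    then have "\<phi>p m = 0" if "m \<in> {0..c}" for m
      using mono_onD[OF mono_\<phi>p, of m c] \<phi>p_nonneg[of m] \<phi>p_nonneg[of c] that c by auto
    then show False
      by (intro not_all_infinite) simp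
  qed
  show "\<phi>m c < 0"
  proof (rule ccontr)
    assume "\<not> \<phi>m c < 0"
    then have "\<phi>m m = 0" if "m \<in> {0..c}" for m
      using antimono_\<phi>m \<phi>m_nonpos[of m] \<phi>m_nonpos[of c] that c by (force simp: monotone_on_def)
    then show False
      by (intro not_all_infinite) simp
  qed
qed

lemma Delta'_nonneg: "0 \<le> Delta' m"
  using \<phi>p_pos[of m] \<phi>m_neg[of m] by (auto simp: Delta'_def intro!: add_nonneg_nonneg)

lemma Delta'_eq_0: "m \<le> 0 \<Longrightarrow> Delta' m = 0"
  by (simp add: Delta'_def)

lemma ennreal_Delta':
  assumes m: "0 < m"
  shows "inverse (2 * ennreal (\<phi>p m)) + inverse (2 * ennreal \<bar>\<phi>m m\<bar>) = ennreal (Delta' m)"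
proof -
  have pos: "0 < \<phi>p m" "0 < \<bar>\<phi>m m\<bar>"
    using \<phi>p_pos[OF m] \<phi>m_neg[OF m] by auto
  have "2 * ennreal (\<phi>p m) = ennreal (2 * \<phi>p m)" "2 * ennreal \<bar>\<phi>m m\<bar> = ennreal (2 * \<bar>\<phi>m m\<bar>)"
    using pos by (simp_all add: ennreal_mult)
  then have "inverse (2 * ennreal (\<phi>p m)) + inverse (2 * ennreal \<bar>\<phi>m m\<bar>)
      = ennreal (inverse (2 * \<phi>p m)) + ennreal (inverse (2 * \<bar>\<phi>m m\<bar>))"
    using pos by (simp only: inverse_ennreal mult_pos_pos zero_less_numeral)
  also have "\<dots> = ennreal (Delta' m)"
    using pos m by (simp add: Delta'_def ennreal_plus[symmetric] del: ennreal_plus)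
  finally show ?thesis .
qed

lemma borel_measurable_\<phi>p_max_0[measurable]: "(\<lambda>x. \<phi>p (max x 0)) \<in> borel_measurable borel"
  by (rule borel_measurable_mono_on_max_0[OF mono_\<phi>p])

lemma borel_measurable_\<phi>m_max_0[measurable]: "(\<lambda>x. \<phi>m (max x 0)) \<in> borel_measurable borel"
proof -
  have "(\<lambda>x. - \<phi>m (max x 0)) \<in> borel_measurable borel"
    using antimono_\<phi>m by (intro borel_measurable_mono_on_max_0) (auto simp: monotone_on_def)
  then show ?thesis
    using borel_measurable_uminus by fastforce
qed

lemma borel_measurable_Delta'[measurable]: "Delta' \<in> borel_measurable borel"
proof -
  have "Delta' = (\<lambda>m. if 0 < m then inverse (2 * \<phi>p (max m 0)) + inverse (2 * \<bar>\<phi>m (max m 0)\<bar>) else 0)"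
    by (auto simp: Delta'_def fun_eq_iff max_def)
  also have "\<dots> \<in> borel_measurable borel"
    by measurable
  finally show ?thesis .
qed

lemma nn_integral_Delta':
  "(\<integral>\<^sup>+ m \<in> {0..l}. (inverse (2 * ennreal (\<phi>p m)) + inverse (2 * ennreal \<bar>\<phi>m m\<bar>)) \<partial>lborel)
    = (\<integral>\<^sup>+ m. ennreal (Delta' m) * indicator {0..l} m \<partial>lborel)"
proof (rule nn_integral_cong_AE)
  show "AE m in lborel. (inverse (2 * ennreal (\<phi>p m)) + inverse (2 * ennreal \<bar>\<phi>m m\<bar>)) * indicator {0..l} m
      = ennreal (Delta' m) * indicator {0..l} m"
    using AE_lborel_singleton[of 0] by eventually_elim (auto simp: ennreal_Delta' split: split_indicator)
qed

lemma nn_integral_Delta'_finite: "(\<integral>\<^sup>+ m. ennreal (Delta' m) * indicator {0..l} m \<partial>lborel) < \<infinity>"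
proof (cases "0 < l")
  case True
  then show ?thesis
    using Delta_finite[OF True] by (simp add: nn_integral_Delta')
next
  case False
  then have "(\<lambda>m. ennreal (Delta' m) * indicator {0..l} m) = (\<lambda>_. 0)"
    by (auto simp: Delta'_eq_0 split: split_indicator)
  then show ?thesis
    by (simp del: mult_eq_0_iff)
qed

lemma set_integrable_Delta': "set_integrable lborel {a..b} Delta'"
proof -
  have "(\<integral>\<^sup>+ m. ennreal (norm (indicator {a..b} m *\<^sub>R Delta' m)) \<partial>lborel)
        \<le> (\<integral>\<^sup>+ m. ennreal (Delta' m) * indicator {0..b} m \<partial>lborel)"
    using Delta'_nonneg Delta'_eq_0
    by (intro nn_integral_mono) (auto simp: not_le split: split_indicator)
  also have "\<dots> < \<infinity>"
    by (rule nn_integral_Delta'_finite)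
  finally show ?thesis
    unfolding set_integrable_def by (intro integrableI_bounded) auto
qed

lemma Delta_eq_integral:
  assumes "a \<le> 0"
  shows "Delta l = integral {a..l} Delta'"
proof -
  have "Delta l = enn2real (\<integral>\<^sup>+ m. ennreal (indicator {a..l} m *\<^sub>R Delta' m) \<partial>lborel)"
    unfolding Delta_def nn_integral_Delta' using assms Delta'_eq_0
    by (intro arg_cong[where f = enn2real] nn_integral_cong) (auto split: split_indicator)
  also have "\<dots> = (LINT m:{a..l}|lborel. Delta' m)"
    using set_integrable_Delta'[of a l] Delta'_nonneg unfolding set_lebesgue_integral_def set_integrable_def
    by (subst integral_eq_nn_integral) auto
  also have "\<dots> = integral {a..l} Delta'"
    by (rule set_borel_integral_eq_integral(2)[OF set_integrable_Delta'])
  finally show ?thesis .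
qed

lemma Delta_eq_0: "l \<le> 0 \<Longrightarrow> Delta l = 0"
  using Delta_eq_integral[of l l] by simp

lemma Delta_nonneg: "0 \<le> Delta l"
  by (simp add: Delta_def)

lemma Delta_diff:
  assumes "0 \<le> a" "a \<le> b"
  shows "Delta b - Delta a = integral {a..b} Delta'"
  using Henstock_Kurzweil_Integration.integral_combine[of 0 a b Delta'] assms
    set_borel_integral_eq_integral(1)[OF set_integrable_Delta'[of 0 b]] Delta_eq_integral[of 0]
  by simp

lemma isCont_Delta: "isCont Delta x"
proof -
  have "continuous_on {- \<bar>x\<bar> - 1..\<bar>x\<bar> + 1} (\<lambda>l. integral {- \<bar>x\<bar> - 1..l} Delta')"
    by (intro indefinite_integral_continuous_1 set_borel_integral_eq_integral(1) set_integrable_Delta')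
  then have "continuous_on {- \<bar>x\<bar> - 1..\<bar>x\<bar> + 1} Delta"
    using Delta_eq_integral[of "- \<bar>x\<bar> - 1"] by simp
  then show ?thesis
    by (rule continuous_on_interior) auto
qed

lemma borel_measurable_Delta[measurable]: "Delta \<in> borel_measurable borel"
  by (intro borel_measurable_continuous_onI continuous_at_imp_continuous_on ballI isCont_Delta)

lemma Delta_strict_mono:
  assumes ab: "0 \<le> a" "a < b"
  shows "Delta a < Delta b"
proof -
  have "integral {a..b} (\<lambda>_. inverse (2 * \<phi>p b)) \<le> integral {a..b} Delta'"
  proof (rule integral_le_open_interval)
    show "Delta' integrable_on {a..b}"
      by (rule set_borel_integral_eq_integral(1)[OF set_integrable_Delta'])
    fix m assume m: "a < m" "m < b"
    then have "0 < \<phi>p m" "\<phi>p m \<le> \<phi>p b" "0 < m"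
      using ab \<phi>p_pos[of m] mono_onD[OF mono_\<phi>p, of m b] by auto
    then show "inverse (2 * \<phi>p b) \<le> Delta' m"
      by (simp add: Delta'_def add_increasing2 le_imp_inverse_le)
  qed (simp add: integrable_const_ivl)
  moreover have "0 < integral {a..b} (\<lambda>_. inverse (2 * \<phi>p b))"
    using ab \<phi>p_pos[of b] by simp
  ultimately show ?thesis
    using Delta_diff[OF ab(1) less_imp_le[OF ab(2)]] by simp
qed

lemma mono_Delta: "mono Delta"
proof (rule monoI)
  fix a b :: real assume "a \<le> b"
  then show "Delta a \<le> Delta b"
    using Delta_strict_mono[of a b] Delta_eq_0[of a] Delta_nonneg[of b]
    by (cases "a \<le> 0"; cases "a = b") auto
qed

lemma Delta_le_iff: "0 \<le> x \<Longrightarrow> 0 \<le> y \<Longrightarrow> Delta x \<le> Delta y \<longleftrightarrow> x \<le> y"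
  using Delta_strict_mono[of x y] Delta_strict_mono[of y x] by (cases x y rule: linorder_cases) auto

lemma Delta_pos: "0 < m \<Longrightarrow> 0 < Delta m"
  using Delta_strict_mono[of 0 m] Delta_eq_0[of 0] by simp

lemma nn_integral_Delta'_Icc:
  assumes "0 \<le> a" "a \<le> b"
  shows "(\<integral>\<^sup>+ m. ennreal (Delta' m) * indicator {a..b} m \<partial>lborel) = ennreal (Delta b - Delta a)"
proof -
  have "(\<integral>\<^sup>+ m. ennreal (Delta' m) * indicator {a..b} m \<partial>lborel)
      = (\<integral>\<^sup>+ m. ennreal (indicator {a..b} m *\<^sub>R Delta' m) \<partial>lborel)"
    by (intro nn_integral_cong) (auto simp: indicator_def)
  also have "\<dots> = ennreal (LINT m:{a..b}|lborel. Delta' m)"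
    using set_integrable_Delta'[of a b] Delta'_nonneg unfolding set_lebesgue_integral_def
    by (intro nn_integral_eq_integral) (auto simp: set_integrable_def)
  also have "\<dots> = ennreal (Delta b - Delta a)"
    using Delta_diff[OF assms] set_borel_integral_eq_integral(2)[OF set_integrable_Delta'] by simp
  finally show ?thesis .
qed

end

lemma emeasure_density_indicator_atLeast_Icc:
  "emeasure (density lborel (indicator {0..} :: real \<Rightarrow> ennreal)) {a..b} = ennreal (b - max a 0)"
proof -
  have "emeasure (density lborel (indicator {0..} :: real \<Rightarrow> ennreal)) {a..b}
      = (\<integral>\<^sup>+ x. indicator {0..} x * indicator {a..b} x \<partial>lborel)"
    by (rule emeasure_density) auto
  also have "\<dots> = (\<integral>\<^sup>+ x. indicator {max a 0..b} x \<partial>lborel)"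
    by (intro nn_integral_cong) (auto simp: indicator_def)
  also have "\<dots> = emeasure lborel {max a 0..b}"
    by simp
  also have "\<dots> = ennreal (b - max a 0)"
    by (auto simp: emeasure_lborel_Icc_eq ennreal_neg)
  finally show ?thesis .
qed

lemma measure_eqI_Icc:
  fixes M N :: "real measure"
  assumes sets: "sets M = sets borel" "sets N = sets borel"
    and fin: "\<And>a b. emeasure M {a..b} < \<infinity>" and eq: "\<And>a b. emeasure M {a..b} = emeasure N {a..b}"
  shows "M = N"
proof (rule measure_eqI_generator_eq[where \<Omega> = UNIV and E = "range (\<lambda>(a, b). {a..b})"
      and A = "\<lambda>i. {- real i..real i}"])
  show "Int_stable (range (\<lambda>(a, b). {a..b::real}))"
    by (auto simp: Int_stable_def intro!: rev_image_eqI[of "(max _ _, min _ _)"])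
  show "sets M = sigma_sets UNIV (range (\<lambda>(a, b). {a..b}))" "sets N = sigma_sets UNIV (range (\<lambda>(a, b). {a..b}))"
    unfolding sets by (subst borel_eq_atLeastAtMost, simp add: sets_measure_of)+
  show "(\<Union>i. {- real i..real i}) = (UNIV :: real set)"
  proof (intro set_eqI iffI)
    fix x :: real
    obtain n :: nat where "\<bar>x\<bar> \<le> real n"
      using real_arch_simple by blast
    then show "x \<in> (\<Union>i. {- real i..real i})"
      by (intro UN_I[of n]) auto
  qed auto
qed (use fin eq in \<open>auto simp: less_top\<close>)

locale phi_pair_unbounded = phi_pair +
  assumes Delta_at_top: "filterlim Delta at_top at_top"
begin

lemma Delta_surj:
  assumes "0 \<le> t"
  obtains m where "0 \<le> m" "Delta m = t"
proof -
  obtain M where M: "\<And>m. M \<le> m \<Longrightarrow> t \<le> Delta m"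
    using Delta_at_top by (auto simp: filterlim_at_top eventually_at_top_linorder)
  have "Delta 0 \<le> t" "t \<le> Delta (max M 0)" "0 \<le> max M 0"
    using Delta_eq_0[of 0] assms M[of "max M 0"] by auto
  then show ?thesis
    using IVT[of Delta 0 t "max M 0"] isCont_Delta that by auto
qed

lemma Delta_vimage_Icc:
  assumes "0 \<le> \<alpha>" "0 \<le> \<beta>" "Delta \<alpha> = max a 0" "Delta \<beta> = b" "0 < m"
  shows "Delta m \<in> {a..b} \<longleftrightarrow> m \<in> {\<alpha>..\<beta>}"
  using Delta_le_iff[OF assms(1), of m] Delta_le_iff[OF _ assms(2), of m] Delta_pos[of m] assms by auto

lemma emeasure_distr_Delta_Icc:
  "emeasure (distr (density lborel Delta') borel Delta) {a..b} = ennreal (b - max a 0)"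
proof -
  have "emeasure (distr (density lborel Delta') borel Delta) {a..b}
      = emeasure (density lborel Delta') (Delta -` {a..b})"
    by (subst emeasure_distr) auto
  also have "\<dots> = (\<integral>\<^sup>+ m. ennreal (Delta' m) * indicator (Delta -` {a..b}) m \<partial>lborel)"
    using measurable_sets[OF borel_measurable_Delta, of "{a..b}"] by (intro emeasure_density) auto
  also have "\<dots> = ennreal (b - max a 0)"
  proof (cases "max a 0 \<le> b")
    case False
    have "ennreal (Delta' m) * indicator (Delta -` {a..b}) m = 0" for m
      using Delta_pos[of m] Delta'_eq_0[of m] False by (cases "0 < m") (auto split: split_indicator)
    then have "(\<integral>\<^sup>+ m. ennreal (Delta' m) * indicator (Delta -` {a..b}) m \<partial>lborel) = (\<integral>\<^sup>+ m. 0 \<partial>(lborel :: real measure))"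
      by (simp only:)
    moreover have "b - max a 0 \<le> 0"
      using False by linarith
    ultimately show ?thesis
      by (simp add: ennreal_neg)
  next
    case True
    obtain \<alpha> \<beta> where \<alpha>: "0 \<le> \<alpha>" "Delta \<alpha> = max a 0" and \<beta>: "0 \<le> \<beta>" "Delta \<beta> = b"
      using Delta_surj[of "max a 0"] Delta_surj[of b] True by (metis max.cobounded2 order_trans)
    have "\<alpha> \<le> \<beta>"
      using Delta_le_iff[OF \<alpha>(1) \<beta>(1)] \<alpha> \<beta> True by simp
    have "ennreal (Delta' m) * indicator (Delta -` {a..b}) m = ennreal (Delta' m) * indicator {\<alpha>..\<beta>} m" for m
      using Delta_vimage_Icc[OF \<alpha>(1) \<beta>(1) \<alpha>(2) \<beta>(2), of m] Delta'_eq_0[of m]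
      by (cases "0 < m") (simp_all split: split_indicator)
    then show ?thesis
      using nn_integral_Delta'_Icc[OF \<alpha>(1) \<open>\<alpha> \<le> \<beta>\<close>] \<alpha> \<beta> by simp
  qed
  finally show ?thesis .
qed

text \<open>The substitution \<open>t = Delta m\<close>: \<open>Delta\<close> is an increasing bijection of \<open>[0, \<infinity>)\<close>.\<close>

lemma distr_Delta: "density lborel (indicator {0..}) = distr (density lborel Delta') borel Delta"
  by (rule measure_eqI_Icc) (simp_all add: emeasure_density_indicator_atLeast_Icc emeasure_distr_Delta_Icc)

lemma nn_integral_Delta_substitution:
  assumes [measurable]: "h \<in> borel_measurable borel"
  shows "(\<integral>\<^sup>+ m. h (Delta m) * ennreal (Delta' m) \<partial>lborel) = (\<integral>\<^sup>+ t. h t * indicator {0..} t \<partial>lborel)"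
proof -
  have "(\<integral>\<^sup>+ t. h t * indicator {0..} t \<partial>lborel) = (\<integral>\<^sup>+ t. h t \<partial>distr (density lborel Delta') borel Delta)"
    unfolding distr_Delta[symmetric] by (subst nn_integral_density) (auto simp: mult.commute)
  also have "\<dots> = (\<integral>\<^sup>+ m. ennreal (Delta' m) * h (Delta m) \<partial>lborel)"
    by (simp add: nn_integral_distr nn_integral_density)
  finally show ?thesis
    by (simp add: mult.commute)
qed

lemma nn_integral_exp_Delta:
  assumes "0 \<le> c"
  shows "(\<integral>\<^sup>+ m. ennreal (exp (Delta m)) * ennreal (Delta' m) * indicator {..c} m \<partial>lborel)
    = ennreal (exp (Delta c) - 1)"
proof -
  let ?h = "\<lambda>t. ennreal (exp t) * indicator {..Delta c} t"
  have "ennreal (exp (Delta m)) * ennreal (Delta' m) * indicator {..c} m = ?h (Delta m) * ennreal (Delta' m)" for m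
    using Delta_le_iff[of m c] assms Delta'_eq_0[of m]
    by (cases "0 < m") (auto simp: mult_ac split: split_indicator)
  then have "(\<integral>\<^sup>+ m. ennreal (exp (Delta m)) * ennreal (Delta' m) * indicator {..c} m \<partial>lborel)
      = (\<integral>\<^sup>+ m. ?h (Delta m) * ennreal (Delta' m) \<partial>lborel)"
    by (intro nn_integral_cong) blast
  also have "\<dots> = (\<integral>\<^sup>+ t. ?h t * indicator {0..} t \<partial>lborel)"
    by (rule nn_integral_Delta_substitution) measurable
  also have "\<dots> = (\<integral>\<^sup>+ t. ennreal (exp t) * indicator {0..Delta c} t \<partial>lborel)"
    by (intro nn_integral_cong) (auto split: split_indicator)
  also have "\<dots> = ennreal (exp (Delta c) - 1)"
    by (rule nn_integral_exp_Icc[OF Delta_nonneg])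
  finally show ?thesis .
qed

lemma nn_integral_exp_neg_Delta:
  assumes "0 \<le> c"
  shows "(\<integral>\<^sup>+ m. ennreal (exp (- Delta m)) * ennreal (Delta' m) * indicator {c..} m \<partial>lborel)
    = ennreal (exp (- Delta c))"
proof -
  let ?h = "\<lambda>t. ennreal (exp (- t)) * indicator {Delta c..} t"
  have "ennreal (exp (- Delta m)) * ennreal (Delta' m) * indicator {c..} m = ?h (Delta m) * ennreal (Delta' m)" for m
    using Delta_le_iff[of c m] assms Delta'_eq_0[of m]
    by (cases "0 < m") (auto simp: mult_ac split: split_indicator)
  then have "(\<integral>\<^sup>+ m. ennreal (exp (- Delta m)) * ennreal (Delta' m) * indicator {c..} m \<partial>lborel)
      = (\<integral>\<^sup>+ m. ?h (Delta m) * ennreal (Delta' m) \<partial>lborel)"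
    by (intro nn_integral_cong) blast
  also have "\<dots> = (\<integral>\<^sup>+ t. ?h t * indicator {0..} t \<partial>lborel)"
    by (rule nn_integral_Delta_substitution) measurable
  also have "\<dots> = (\<integral>\<^sup>+ t. ennreal (exp (- t)) * indicator {Delta c..} t \<partial>lborel)"
    using Delta_nonneg[of c] by (intro nn_integral_cong) (auto split: split_indicator)
  also have "\<dots> = ennreal (exp (- Delta c))"
    by (rule nn_integral_exp_neg_Ici)
  finally show ?thesis .
qed

end

section \<open>The tail averages \<open>\<Sigma>\<close>\<close>

lemma set_integrable_Icc_bound:
  fixes k h :: "real \<Rightarrow> real"
  assumes h: "set_integrable lborel {0..l} h" and k: "(\<lambda>m. k (max m 0)) \<in> borel_measurable borel"
    and bound: "\<And>m. 0 < m \<Longrightarrow> m \<le> l \<Longrightarrow> \<bar>k m\<bar> \<le> h m"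
  shows "set_integrable lborel {0..l} k"
proof (rule set_integrable_bound[OF h])
  have "(\<lambda>m. indicator {0..l} m *\<^sub>R k m) = (\<lambda>m. indicator {0..l} m *\<^sub>R k (max m 0))"
    by (auto split: split_indicator)
  then show "set_borel_measurable lborel {0..l} k"
    using k by (simp add: set_borel_measurable_def)
  show "AE m in lborel. m \<in> {0..l} \<longrightarrow> norm (k m) \<le> norm (h m)"
    using AE_lborel_singleton[of 0]
  proof eventually_elim
    case (elim m)
    show ?case
    proof
      assume "m \<in> {0..l}"
      then have "\<bar>k m\<bar> \<le> h m"
        using elim by (intro bound) auto
      then show "norm (k m) \<le> norm (h m)"
        by simp
    qed
  qed
qed

locale tail_setting = phi_pair_unbounded +
  fixes F :: "real \<Rightarrow> real" and \<nu> :: "real measure"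
  assumes convex_F: "convex_on {0..} F" and mono_F: "mono_on {0..} F"
    and prob_space_\<nu>: "prob_space \<nu>" and sets_\<nu>: "sets \<nu> = sets borel"
    and tail_\<nu>: "\<And>l. 0 \<le> l \<Longrightarrow> measure \<nu> {l..} = exp (- Delta l)"
    and set_integrable_rderiv_F: "set_integrable \<nu> {0..} (rderiv F)"
begin

definition Sigma :: "real \<Rightarrow> real" where
  "Sigma l = (\<integral>m\<in>{l..}. rderiv F m \<partial>\<nu>) / measure \<nu> {l..}"

definition excess :: "real \<Rightarrow> real" where
  "excess l = Sigma l - rderiv F l"

definition \<nu>_density :: "real \<Rightarrow> real" where
  "\<nu>_density m = exp (- Delta m) * Delta' m"

lemma rderiv_F_nonneg: "0 \<le> l \<Longrightarrow> 0 \<le> rderiv F l"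
  by (rule rderiv_nonneg[OF convex_F mono_F])

text \<open>\<open>rderiv F\<close> is unconstrained on \<open>(-\<infinity>, 0)\<close>, so measurability is only claimed after
  composing with \<open>max _ 0\<close>.\<close>

lemma borel_measurable_rderiv_F_max_0[measurable]: "(\<lambda>x. rderiv F (max x 0)) \<in> borel_measurable borel"
  by (rule borel_measurable_mono_on_max_0[OF mono_on_rderiv[OF convex_F mono_F]])

lemma set_integrable_rderiv_F_atLeast: "0 \<le> l \<Longrightarrow> set_integrable \<nu> {l..} (rderiv F)"
  by (rule set_integrable_subset[OF set_integrable_rderiv_F]) (auto simp: sets_\<nu>)

lemma measure_\<nu>_pos: "0 \<le> l \<Longrightarrow> 0 < measure \<nu> {l..}"
  by (simp add: tail_\<nu>)

lemma rderiv_F_le_Sigma: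
  assumes l: "0 \<le> l"
  shows "rderiv F l \<le> Sigma l"
proof -
  interpret prob_space \<nu> by (rule prob_space_\<nu>)
  have "set_integrable \<nu> {l..} (\<lambda>_. rderiv F l)"
    unfolding set_integrable_def
    by (intro integrable_scaleR_left integrable_real_indicator) (simp_all add: sets_\<nu> less_top[symmetric])
  then have "(\<integral>m\<in>{l..}. rderiv F l \<partial>\<nu>) \<le> (\<integral>m\<in>{l..}. rderiv F m \<partial>\<nu>)"
    using l mono_on_rderiv[OF convex_F mono_F]
    by (intro set_integral_mono set_integrable_rderiv_F_atLeast) (auto simp: mono_on_def)
  then have "rderiv F l * measure \<nu> {l..} \<le> (\<integral>m\<in>{l..}. rderiv F m \<partial>\<nu>)"
    by (simp add: set_integral_const sets_\<nu> mult.commute)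
  then show ?thesis
    using measure_\<nu>_pos[OF l] by (simp add: Sigma_def field_simps)
qed

lemma Sigma_0_nonneg: "0 \<le> Sigma 0"
  using rderiv_F_le_Sigma[of 0] rderiv_F_nonneg[of 0] by simp

lemma Sigma_le:
  assumes l: "0 \<le> l"
  shows "Sigma l \<le> Sigma 0 * exp (Delta l)"
proof -
  have "(\<integral>m\<in>{l..}. rderiv F m \<partial>\<nu>) = (\<integral>m\<in>{0..}. indicator {l..} m * rderiv F m \<partial>\<nu>)"
    using l by (auto simp: set_lebesgue_integral_def intro!: Bochner_Integration.integral_cong split: split_indicator)
  also have "\<dots> \<le> (\<integral>m\<in>{0..}. rderiv F m \<partial>\<nu>)"
  proof (rule set_integral_mono)
    have "(\<lambda>m. indicator {0..} m *\<^sub>R (indicator {l..} m * rderiv F m)) = (\<lambda>m. indicator {l..} m *\<^sub>R rderiv F m)"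
      using l by (auto split: split_indicator)
    then show "set_integrable \<nu> {0..} (\<lambda>m. indicator {l..} m * rderiv F m)"
      using set_integrable_rderiv_F_atLeast[OF l] by (simp add: set_integrable_def)
  qed (use set_integrable_rderiv_F rderiv_F_nonneg in \<open>auto split: split_indicator\<close>)
  finally show ?thesis
    using l by (simp add: Sigma_def tail_\<nu> Delta_eq_0 exp_minus field_simps)
qed

lemma \<nu>_density_nonneg: "0 \<le> \<nu>_density m"
  by (simp add: \<nu>_density_def Delta'_nonneg)

lemma \<nu>_density_eq_0: "m \<le> 0 \<Longrightarrow> \<nu>_density m = 0"
  by (simp add: \<nu>_density_def Delta'_eq_0)

lemma borel_measurable_\<nu>_density[measurable]: "\<nu>_density \<in> borel_measurable borel"
  unfolding \<nu>_density_def[abs_def] by measurable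

lemma exp_Delta_\<nu>_density: "exp (Delta m) * \<nu>_density m = Delta' m"
  by (simp add: \<nu>_density_def exp_minus field_simps)

lemma \<nu>_eq_density: "\<nu> = density lborel \<nu>_density"
proof (rule measure_eqI_atLeast)
  interpret prob_space \<nu> by (rule prob_space_\<nu>)
  show "sets \<nu> = sets borel" "sets (density lborel \<nu>_density) = sets borel"
    by (simp_all add: sets_\<nu>)
  show "emeasure \<nu> {x..} < \<infinity>" for x
    by (simp add: less_top[symmetric])
  fix x :: real
  have "emeasure (density lborel \<nu>_density) {x..}
      = (\<integral>\<^sup>+ m. ennreal (exp (- Delta m)) * ennreal (Delta' m) * indicator {max x 0..} m \<partial>lborel)"
    using Delta'_eq_0 by (subst emeasure_density)
      (auto intro!: nn_integral_cong simp: \<nu>_density_def ennreal_mult Delta'_nonneg split: split_indicator)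
  also have "\<dots> = ennreal (exp (- Delta (max x 0)))"
    by (rule nn_integral_exp_neg_Delta) simp
  also have "\<dots> = emeasure \<nu> {x..}"
  proof (cases "0 \<le> x")
    case False
    have "emeasure \<nu> {0..} \<le> emeasure \<nu> {x..}"
      using False by (intro emeasure_mono) (auto simp: sets_\<nu>)
    moreover have "emeasure \<nu> {0..} = 1"
      using tail_\<nu>[of 0] Delta_eq_0[of 0] by (simp add: emeasure_eq_measure)
    ultimately have "emeasure \<nu> {x..} = 1"
      using emeasure_le_1[of "{x..}"] by (metis antisym)
    then show ?thesis
      using False Delta_eq_0[of 0] by simp
  qed (simp add: tail_\<nu> emeasure_eq_measure)
  finally show "emeasure \<nu> {x..} = emeasure (density lborel \<nu>_density) {x..}"
    by simp
qed

lemma \<nu>_density_rderiv_F: "\<nu>_density u * rderiv F u = \<nu>_density u * rderiv F (max u 0)"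
  by (cases "0 \<le> u") (simp_all add: \<nu>_density_eq_0)

lemma borel_measurable_\<nu>_density_rderiv_F[measurable]:
  "(\<lambda>u. \<nu>_density u * rderiv F u) \<in> borel_measurable borel"
  unfolding \<nu>_density_rderiv_F by measurable

lemma set_integral_\<nu>:
  assumes l: "0 \<le> l"
  shows "set_integrable lborel {l..} (\<lambda>u. \<nu>_density u * rderiv F u)"
    and "(\<integral>m\<in>{l..}. rderiv F m \<partial>\<nu>) = (LINT u:{l..}|lborel. \<nu>_density u * rderiv F u)"
proof -
  let ?f = "\<lambda>u. indicator {l..} u *\<^sub>R rderiv F (max u 0)"
  have eq: "(\<lambda>u. indicator {l..} u *\<^sub>R rderiv F u) = ?f"
    using l by (auto split: split_indicator)
  have density_eq: "(\<lambda>u. \<nu>_density u *\<^sub>R ?f u) = (\<lambda>u. indicator {l..} u *\<^sub>R (\<nu>_density u * rderiv F u))"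
    using l by (intro ext) (auto simp: max_def \<nu>_density_eq_0 split: split_indicator)
  have "integrable (density lborel \<nu>_density) ?f"
    using set_integrable_rderiv_F_atLeast[OF l] unfolding set_integrable_def eq \<nu>_eq_density .
  then have "integrable lborel (\<lambda>u. \<nu>_density u *\<^sub>R ?f u)"
    by (subst (asm) integrable_density) (simp_all add: \<nu>_density_nonneg)
  then show "set_integrable lborel {l..} (\<lambda>u. \<nu>_density u * rderiv F u)"
    unfolding set_integrable_def density_eq .
  have "(\<integral>m\<in>{l..}. rderiv F m \<partial>\<nu>) = integral\<^sup>L (density lborel \<nu>_density) ?f"
    unfolding set_lebesgue_integral_def eq \<nu>_eq_density ..
  also have "\<dots> = integral\<^sup>L lborel (\<lambda>u. \<nu>_density u *\<^sub>R ?f u)"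
    using \<nu>_density_nonneg by (intro integral_density) auto
  finally show "(\<integral>m\<in>{l..}. rderiv F m \<partial>\<nu>) = (LINT u:{l..}|lborel. \<nu>_density u * rderiv F u)"
    unfolding density_eq set_lebesgue_integral_def .
qed

lemma Sigma_eq:
  assumes "0 \<le> l"
  shows "Sigma l = exp (Delta l) * (LINT u:{l..}|lborel. \<nu>_density u * rderiv F u)"
  using assms by (simp add: Sigma_def set_integral_\<nu> tail_\<nu> exp_minus field_simps)

lemma nn_integral_tail:
  assumes l: "0 \<le> l"
  shows "(\<integral>\<^sup>+ u. ennreal (if l \<le> u then \<nu>_density u * rderiv F u else 0) \<partial>lborel)
    = ennreal (exp (- Delta l) * Sigma l)"
proof -
  have "(\<integral>\<^sup>+ u. ennreal (if l \<le> u then \<nu>_density u * rderiv F u else 0) \<partial>lborel)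
      = ennreal (LINT u:{l..}|lborel. \<nu>_density u * rderiv F u)"
    using set_integral_\<nu>(1)[OF l] l \<nu>_density_nonneg rderiv_F_nonneg
    unfolding set_lebesgue_integral_def set_integrable_def
    by (subst nn_integral_eq_integral[symmetric])
      (auto intro!: nn_integral_cong mult_nonneg_nonneg split: split_indicator)
  also have "\<dots> = ennreal (exp (- Delta l) * Sigma l)"
    using Sigma_eq[OF l] by (simp add: exp_minus field_simps)
  finally show ?thesis .
qed

lemma borel_measurable_Sigma_max_0[measurable]: "(\<lambda>l. Sigma (max l 0)) \<in> borel_measurable borel"
proof -
  define f0 where "f0 u = \<nu>_density u * rderiv F (max u 0)" for u
  have [measurable]: "f0 \<in> borel_measurable borel"
    unfolding f0_def[abs_def] by measurable
  have "(\<lambda>l. Sigma (max l 0)) = (\<lambda>l. exp (Delta (max l 0)) * (LINT u|lborel. (if max l 0 \<le> u then f0 u else 0)))"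
  proof (rule ext)
    fix l :: real
    have "(LINT u:{max l 0..}|lborel. \<nu>_density u * rderiv F u) = (LINT u|lborel. (if max l 0 \<le> u then f0 u else 0))"
      unfolding set_lebesgue_integral_def f0_def
      by (intro Bochner_Integration.integral_cong) (auto simp: max_def split: split_indicator)
    then show "Sigma (max l 0) = exp (Delta (max l 0)) * (LINT u|lborel. (if max l 0 \<le> u then f0 u else 0))"
      by (simp add: Sigma_eq)
  qed
  also have "\<dots> \<in> borel_measurable borel"
    by measurable
  finally show ?thesis .
qed

lemma \<nu>_density_rderiv_F_nonneg: "0 \<le> \<nu>_density u * rderiv F u"
  by (cases "0 \<le> u") (simp_all add: \<nu>_density_nonneg rderiv_F_nonneg \<nu>_density_eq_0)

lemma Sigma_nonneg: "0 \<le> l \<Longrightarrow> 0 \<le> Sigma l"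
  using rderiv_F_le_Sigma rderiv_F_nonneg by (blast intro: order_trans)

lemma integrable_\<nu>_density_rderiv_F: "integrable lborel (\<lambda>u. \<nu>_density u * rderiv F u)"
proof -
  have "(\<lambda>u. indicator {0..} u *\<^sub>R (\<nu>_density u * rderiv F u)) = (\<lambda>u. \<nu>_density u * rderiv F u)"
    by (auto simp: \<nu>_density_eq_0 split: split_indicator)
  then show ?thesis
    using set_integral_\<nu>(1)[of 0] by (simp add: set_integrable_def)
qed

lemma integral_\<nu>_density_rderiv_F: "(LINT u|lborel. \<nu>_density u * rderiv F u) = Sigma 0"
proof -
  have "(\<lambda>u. indicator {0..} u *\<^sub>R (\<nu>_density u * rderiv F u)) = (\<lambda>u. \<nu>_density u * rderiv F u)"
    by (auto simp: \<nu>_density_eq_0 split: split_indicator)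
  then show ?thesis
    using Sigma_eq[of 0] Delta_eq_0[of 0] by (simp add: set_lebesgue_integral_def)
qed

text \<open>Tonelli's theorem for \<open>\<integral>\<^sub>0\<^sup>l Sigma Delta'\<close>: \<open>Sigma m Delta' m\<close> is \<open>exp (Delta m) Delta' m\<close>
  times a tail integral over \<open>u \<ge> m\<close>, and integrating in \<open>m \<le> min l u\<close> first gives
  \<open>exp (Delta (min l u)) - 1\<close>.\<close>

lemma ennreal_Sigma_Delta'_eq_nn_integral:
  "ennreal (Sigma m * Delta' m) * indicator {0..l} m
    = (\<integral>\<^sup>+ u. ennreal (exp (Delta m) * Delta' m) * indicator {0..l} m
        * ennreal (if m \<le> u then \<nu>_density u * rderiv F u else 0) \<partial>lborel)"
proof (cases "m \<in> {0..l}")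
  case True
  have "ennreal (Sigma m * Delta' m) = ennreal ((exp (Delta m) * Delta' m) * (exp (- Delta m) * Sigma m))"
    by (rule arg_cong[where f = ennreal]) (simp add: exp_minus field_simps)
  also have "\<dots> = ennreal (exp (Delta m) * Delta' m) * ennreal (exp (- Delta m) * Sigma m)"
    using True Sigma_nonneg[of m] Delta'_nonneg[of m] by (intro ennreal_mult) auto
  also have "\<dots> = (\<integral>\<^sup>+ u. ennreal (exp (Delta m) * Delta' m)
      * ennreal (if m \<le> u then \<nu>_density u * rderiv F u else 0) \<partial>lborel)"
    using True by (simp add: nn_integral_tail nn_integral_cmult)
  finally show ?thesis
    using True by simp
qed simp

lemma nn_integral_exp_Delta_tail:
  assumes l: "0 \<le> l"
  shows "(\<integral>\<^sup>+ m. ennreal (exp (Delta m) * Delta' m) * indicator {0..l} m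
      * ennreal (if m \<le> u then \<nu>_density u * rderiv F u else 0) \<partial>lborel)
    = ennreal (\<nu>_density u * rderiv F u * (exp (Delta (min l u)) - 1))"
proof (cases "0 \<le> u")
  case True
  let ?w = "\<nu>_density u * rderiv F u"
  have "ennreal (exp (Delta m) * Delta' m) * indicator {0..l} m * ennreal (if m \<le> u then ?w else 0)
      = ennreal ?w * (ennreal (exp (Delta m)) * ennreal (Delta' m) * indicator {..min l u} m)" for m
    using Delta'_eq_0[of m] Delta'_nonneg[of m] \<nu>_density_rderiv_F_nonneg[of u]
    by (auto simp: ennreal_mult mult_ac split: split_indicator)
  then show ?thesis
    using True l \<nu>_density_rderiv_F_nonneg[of u] Delta_nonneg[of "min l u"]
    by (simp add: nn_integral_cmult nn_integral_exp_Delta ennreal_mult)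
next
  case False
  then have "\<nu>_density u = 0"
    by (simp add: \<nu>_density_eq_0)
  then have "ennreal (exp (Delta m) * Delta' m) * indicator {0..l} m
      * ennreal (if m \<le> u then \<nu>_density u * rderiv F u else 0) = 0" for m
    by simp
  with \<open>\<nu>_density u = 0\<close> show ?thesis
    by (simp del: mult_eq_0_iff)
qed

lemma nn_integral_Sigma_Delta':
  assumes l: "0 \<le> l"
  shows "(\<integral>\<^sup>+ m. ennreal (Sigma m * Delta' m) * indicator {0..l} m \<partial>lborel)
       = (\<integral>\<^sup>+ u. ennreal (\<nu>_density u * rderiv F u * (exp (Delta (min l u)) - 1)) \<partial>lborel)"
proof -
  let ?K = "\<lambda>m u. ennreal (exp (Delta m) * Delta' m) * indicator {0..l} m
    * ennreal (if m \<le> u then \<nu>_density u * rderiv F u else 0)"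
  have [measurable]: "(\<lambda>(m, u). ?K m u) \<in> borel_measurable (lborel \<Otimes>\<^sub>M lborel)"
    by measurable
  have "(\<integral>\<^sup>+ m. ennreal (Sigma m * Delta' m) * indicator {0..l} m \<partial>lborel)
      = (\<integral>\<^sup>+ m. (\<integral>\<^sup>+ u. ?K m u \<partial>lborel) \<partial>lborel)"
    by (simp only: ennreal_Sigma_Delta'_eq_nn_integral)
  also have "\<dots> = (\<integral>\<^sup>+ u. (\<integral>\<^sup>+ m. ?K m u \<partial>lborel) \<partial>lborel)"
    by (rule lborel_pair.Fubini'[symmetric]) measurable
  also have "\<dots> = (\<integral>\<^sup>+ u. ennreal (\<nu>_density u * rderiv F u * (exp (Delta (min l u)) - 1)) \<partial>lborel)"
    by (simp only: nn_integral_exp_Delta_tail[OF l])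
  finally show ?thesis .
qed

lemma integrable_tail_weight:
  assumes l: "0 \<le> l"
  shows "integrable lborel (\<lambda>u. \<nu>_density u * rderiv F u * (exp (Delta (min l u)) - 1))"
proof (rule Bochner_Integration.integrable_bound[OF integrable_mult_left[OF integrable_\<nu>_density_rderiv_F]])
  show "AE u in lborel. norm (\<nu>_density u * rderiv F u * (exp (Delta (min l u)) - 1))
      \<le> norm (\<nu>_density u * rderiv F u * exp (Delta l))"
  proof (intro AE_I2)
    fix u
    have "0 \<le> exp (Delta (min l u)) - 1"
      using Delta_nonneg[of "min l u"] by simp
    moreover have "exp (Delta (min l u)) \<le> exp (Delta l)"
      using monoD[OF mono_Delta, of "min l u" l] by simp
    then have "exp (Delta (min l u)) - 1 \<le> exp (Delta l)"
      by linarith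
    ultimately show "norm (\<nu>_density u * rderiv F u * (exp (Delta (min l u)) - 1))
        \<le> norm (\<nu>_density u * rderiv F u * exp (Delta l))"
      using \<nu>_density_rderiv_F_nonneg[of u] by (simp add: abs_mult mult_left_mono)
  qed
qed simp

lemma set_integral_Sigma_Delta'_eq_tail_weight:
  assumes l: "0 \<le> l"
  shows "set_integrable lborel {0..l} (\<lambda>m. Sigma m * Delta' m)"
    and "(LINT m:{0..l}|lborel. Sigma m * Delta' m)
      = (LINT u|lborel. \<nu>_density u * rderiv F u * (exp (Delta (min l u)) - 1))"
proof -
  let ?R = "\<lambda>u. \<nu>_density u * rderiv F u * (exp (Delta (min l u)) - 1)"
  have "(\<integral>\<^sup>+ m. ennreal (indicator {0..l} m * (Sigma m * Delta' m)) \<partial>lborel)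
      = (\<integral>\<^sup>+ m. ennreal (Sigma m * Delta' m) * indicator {0..l} m \<partial>lborel)"
    by (intro nn_integral_cong) (simp split: split_indicator)
  also have "\<dots> = ennreal (LINT u|lborel. ?R u)"
    unfolding nn_integral_Sigma_Delta'[OF l]
    using \<nu>_density_rderiv_F_nonneg Delta_nonneg
    by (intro nn_integral_eq_integral integrable_tail_weight[OF l]) auto
  finally have nn_eq: "(\<integral>\<^sup>+ m. ennreal (indicator {0..l} m * (Sigma m * Delta' m)) \<partial>lborel)
      = ennreal (LINT u|lborel. ?R u)" .
  have "(\<lambda>m. indicator {0..l} m * (Sigma m * Delta' m)) = (\<lambda>m. indicator {0..l} m * (Sigma (max m 0) * Delta' m))"
    by (auto split: split_indicator)
  also have "\<dots> \<in> borel_measurable lborel"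
    by measurable
  finally have "integrable lborel (\<lambda>m. indicator {0..l} m * (Sigma m * Delta' m))
      \<and> (LINT m|lborel. indicator {0..l} m * (Sigma m * Delta' m)) = (LINT u|lborel. ?R u)"
    using nn_eq Sigma_nonneg Delta'_nonneg \<nu>_density_rderiv_F_nonneg Delta_nonneg
    by (subst nn_integral_eq_integrable[symmetric])
      (auto intro!: integral_nonneg_AE split: split_indicator)
  then show "set_integrable lborel {0..l} (\<lambda>m. Sigma m * Delta' m)"
    and "(LINT m:{0..l}|lborel. Sigma m * Delta' m) = (LINT u|lborel. ?R u)"
    by (simp_all add: set_integrable_def set_lebesgue_integral_def)
qed

lemma set_integrable_rderiv_F_Delta': "set_integrable lborel {0..l} (\<lambda>m. rderiv F m * Delta' m)"
proof (rule set_integrable_Icc_bound)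
  show "set_integrable lborel {0..l} (\<lambda>m. exp (Delta l) * (\<nu>_density m * rderiv F m))"
    unfolding set_integrable_def
    by (intro integrable_mult_indicator integrable_mult_right integrable_\<nu>_density_rderiv_F) simp
  show "\<bar>rderiv F m * Delta' m\<bar> \<le> exp (Delta l) * (\<nu>_density m * rderiv F m)" if "0 < m" "m \<le> l" for m
  proof -
    have "\<bar>rderiv F m * Delta' m\<bar> = exp (Delta m) * (\<nu>_density m * rderiv F m)"
      using exp_Delta_\<nu>_density[of m] Delta'_nonneg[of m] rderiv_F_nonneg[of m] that
      by (simp add: mult_ac)
    also have "\<dots> \<le> exp (Delta l) * (\<nu>_density m * rderiv F m)"
      using monoD[OF mono_Delta that(2)] \<nu>_density_rderiv_F_nonneg[of m] by (intro mult_right_mono) simp_all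
    finally show ?thesis .
  qed
qed measurable

text \<open>Splitting the tail weight at \<open>u = l\<close>, using \<open>exp (Delta u) \<nu>_density u = Delta' u\<close>.\<close>

lemma integral_tail_weight:
  assumes l: "0 \<le> l"
  shows "(LINT u|lborel. \<nu>_density u * rderiv F u * (exp (Delta (min l u)) - 1))
    = Sigma l - Sigma 0 + (LINT m:{0..l}|lborel. rderiv F m * Delta' m)"
proof -
  let ?w = "\<lambda>u. \<nu>_density u * rderiv F u"
  have split: "?w u * (exp (Delta (min l u)) - 1)
      = exp (Delta l) * (indicator {l..} u * ?w u) + indicator {0..<l} u * (rderiv F u * Delta' u) - ?w u" for u
    using exp_Delta_\<nu>_density[of u] \<nu>_density_eq_0[of u] Delta'_eq_0[of u]
    by (cases "0 \<le> u") (auto simp: min_def algebra_simps split: split_indicator)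
  have integrable_Ico: "set_integrable lborel {0..<l} (\<lambda>m. rderiv F m * Delta' m)"
    by (rule set_integrable_subset[OF set_integrable_rderiv_F_Delta'[of l]]) auto
  have "(LINT m:{0..<l}|lborel. rderiv F m * Delta' m) = (LINT m:{0..l}|lborel. rderiv F m * Delta' m)"
    using set_integrable_rderiv_F_Delta'[of l] integrable_Ico AE_lborel_singleton[of l]
    by (intro set_integral_cong_set) (auto simp: set_integrable_def set_borel_measurable_def
        intro: borel_measurable_integrable elim!: eventually_mono)
  then show ?thesis
    using set_integral_\<nu>(1)[OF l] integrable_Ico integrable_\<nu>_density_rderiv_F
      Sigma_eq[OF l] integral_\<nu>_density_rderiv_F
    by (simp only: split) (simp add: set_integrable_def set_lebesgue_integral_def)
qed

lemma set_integral_Sigma_Delta':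
  assumes l: "0 \<le> l"
  shows "set_integrable lborel {0..l} (\<lambda>m. Sigma m * Delta' m)"
    and "(LINT m:{0..l}|lborel. Sigma m * Delta' m)
          = Sigma l - Sigma 0 + (LINT m:{0..l}|lborel. rderiv F m * Delta' m)"
  using set_integral_Sigma_Delta'_eq_tail_weight[OF l] integral_tail_weight[OF l] by simp_all

lemma integral_excess_Delta':
  assumes l: "0 \<le> l"
  shows "set_integrable lborel {0..l} (\<lambda>m. excess m * Delta' m)"
    and "(LINT m:{0..l}|lborel. excess m * Delta' m) = Sigma l - Sigma 0"
  using set_integral_Sigma_Delta'[OF l] set_integrable_rderiv_F_Delta'[of l]
  by (simp_all add: excess_def left_diff_distrib)

lemma excess_nonneg: "0 \<le> l \<Longrightarrow> 0 \<le> excess l"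
  using rderiv_F_le_Sigma by (simp add: excess_def)

lemma Sigma_le_exp_Delta:
  assumes "0 \<le> m" "m \<le> l"
  shows "Sigma m \<le> Sigma 0 * exp (Delta l)"
  using Sigma_le[OF assms(1)] monoD[OF mono_Delta assms(2)] Sigma_0_nonneg
  by (meson exp_le_cancel_iff mult_left_mono order_trans)

lemma excess_le: "0 \<le> m \<Longrightarrow> m \<le> l \<Longrightarrow> excess m \<le> Sigma 0 * exp (Delta l)"
  using Sigma_le_exp_Delta rderiv_F_nonneg by (force simp: excess_def)

lemma borel_measurable_excess_max_0[measurable]: "(\<lambda>m. excess (max m 0)) \<in> borel_measurable borel"
  unfolding excess_def by measurable

lemma set_integrable_excess: "set_integrable lborel {0..l} excess"
proof (rule set_integrable_Icc_bound[where h = "\<lambda>_. Sigma 0 * exp (Delta l)"])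
  show "set_integrable lborel {0..l} (\<lambda>_. Sigma 0 * exp (Delta l))"
    by (rule borel_integrable_atLeastAtMost'[OF continuous_on_const])
  show "\<bar>excess m\<bar> \<le> Sigma 0 * exp (Delta l)" if "0 < m" "m \<le> l" for m
    using excess_nonneg[of m] excess_le[of m l] that by simp
qed measurable

lemma set_integrable_excess_div_\<phi>p: "set_integrable lborel {0..l} (\<lambda>m. excess m / \<phi>p m)"
proof (rule set_integrable_Icc_bound)
  show "set_integrable lborel {0..l} (\<lambda>m. 2 * (Sigma 0 * exp (Delta l)) * Delta' m)"
    using set_integrable_Delta' by simp
  show "(\<lambda>m. excess (max m 0) / \<phi>p (max m 0)) \<in> borel_measurable borel"
    by measurable
  fix m assume m: "0 < m" "m \<le> l"
  then have "0 < \<phi>p m" "\<phi>m m < 0"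
    using \<phi>p_pos \<phi>m_neg by auto
  then have "\<bar>excess m / \<phi>p m\<bar> \<le> Sigma 0 * exp (Delta l) / \<phi>p m"
    using excess_nonneg[of m] excess_le[of m l] m by (simp add: divide_right_mono)
  also have "\<dots> = 2 * (Sigma 0 * exp (Delta l)) * inverse (2 * \<phi>p m)"
    by (simp add: field_simps)
  also have "\<dots> \<le> 2 * (Sigma 0 * exp (Delta l)) * Delta' m"
    using \<open>\<phi>m m < 0\<close> m Sigma_0_nonneg by (intro mult_left_mono) (simp_all add: Delta'_def)
  finally show "\<bar>excess m / \<phi>p m\<bar> \<le> 2 * (Sigma 0 * exp (Delta l)) * Delta' m" .
qed

lemma set_integrable_excess_div_\<phi>m: "set_integrable lborel {0..l} (\<lambda>m. excess m / \<bar>\<phi>m m\<bar>)"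
proof (rule set_integrable_Icc_bound)
  show "set_integrable lborel {0..l} (\<lambda>m. 2 * (Sigma 0 * exp (Delta l)) * Delta' m)"
    using set_integrable_Delta' by simp
  show "(\<lambda>m. excess (max m 0) / \<bar>\<phi>m (max m 0)\<bar>) \<in> borel_measurable borel"
    by measurable
  fix m assume m: "0 < m" "m \<le> l"
  then have "0 < \<phi>p m" "\<phi>m m < 0"
    using \<phi>p_pos \<phi>m_neg by auto
  then have "\<bar>excess m / \<bar>\<phi>m m\<bar>\<bar> = excess m / \<bar>\<phi>m m\<bar>"
    using excess_nonneg[of m] m by simp
  also have "\<dots> \<le> Sigma 0 * exp (Delta l) / \<bar>\<phi>m m\<bar>"
    using excess_le[of m l] m by (intro divide_right_mono) auto
  also have "\<dots> = 2 * (Sigma 0 * exp (Delta l)) * inverse (2 * \<bar>\<phi>m m\<bar>)"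
    by (simp add: field_simps)
  also have "\<dots> \<le> 2 * (Sigma 0 * exp (Delta l)) * Delta' m"
    using \<open>0 < \<phi>p m\<close> m Sigma_0_nonneg by (intro mult_left_mono) (simp_all add: Delta'_def)
  finally show "\<bar>excess m / \<bar>\<phi>m m\<bar>\<bar> \<le> 2 * (Sigma 0 * exp (Delta l)) * Delta' m" .
qed

sublocale legendre: legendre_data \<phi>p \<phi>m excess "Sigma 0" "F 0"
  using mono_\<phi>p antimono_\<phi>m \<phi>p_nonneg \<phi>m_nonpos \<phi>p_pos \<phi>m_neg excess_nonneg Sigma_0_nonneg
    set_integrable_excess_div_\<phi>p set_integrable_excess_div_\<phi>m set_integrable_excess
  by unfold_locales auto

lemma Ap_minus_Am_eq:
  assumes m: "0 \<le> m"
  shows "legendre.Ap m - legendre.Am m = 2 * Sigma m"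
proof -
  have "(LINT u:{0..m}|lborel. excess u / \<phi>p u) + (LINT u:{0..m}|lborel. excess u / \<bar>\<phi>m u\<bar>)
      = (LINT u:{0..m}|lborel. excess u / \<phi>p u + excess u / \<bar>\<phi>m u\<bar>)"
    using set_integrable_excess_div_\<phi>p set_integrable_excess_div_\<phi>m by simp
  also have "\<dots> = (LINT u:{0..m}|lborel. 2 * (excess u * Delta' u))"
    unfolding set_lebesgue_integral_def
  proof (rule integral_cong_AE)
    show "AE u in lborel. indicator {0..m} u *\<^sub>R (excess u / \<phi>p u + excess u / \<bar>\<phi>m u\<bar>)
        = indicator {0..m} u *\<^sub>R (2 * (excess u * Delta' u))"
      using AE_lborel_singleton[of 0] by eventually_elim
        (use \<phi>p_pos \<phi>m_neg in \<open>auto simp: Delta'_def field_simps split: split_indicator\<close>)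
  next
    have "set_integrable lborel {0..m} (\<lambda>u. excess u / \<phi>p u + excess u / \<bar>\<phi>m u\<bar>)"
      using set_integrable_excess_div_\<phi>p set_integrable_excess_div_\<phi>m by simp
    then show "(\<lambda>u. indicator {0..m} u *\<^sub>R (excess u / \<phi>p u + excess u / \<bar>\<phi>m u\<bar>)) \<in> borel_measurable lborel"
      unfolding set_integrable_def by (rule borel_measurable_integrable)
    have "set_integrable lborel {0..m} (\<lambda>u. 2 * (excess u * Delta' u))"
      using integral_excess_Delta'(1)[OF m] by simp
    then show "(\<lambda>u. indicator {0..m} u *\<^sub>R (2 * (excess u * Delta' u))) \<in> borel_measurable lborel"
      unfolding set_integrable_def by (rule borel_measurable_integrable)
  qed
  also have "\<dots> = 2 * (Sigma m - Sigma 0)"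
    using integral_excess_Delta'[OF m] by simp
  finally show ?thesis
    by (simp add: legendre.Ap_def legendre.Am_def)
qed

lemma F_eq_Gamma_minus_C:
  assumes l: "0 \<le> l"
  shows "F l = (LINT m:{0..l}|lborel. (legendre.Ap m - legendre.Am m) / 2) - legendre.C l"
proof -
  have Sigma_integrable: "set_integrable lborel {0..l} Sigma"
  proof (rule set_integrable_Icc_bound[where h = "\<lambda>_. Sigma 0 * exp (Delta l)"])
    show "set_integrable lborel {0..l} (\<lambda>_. Sigma 0 * exp (Delta l))"
      by (rule borel_integrable_atLeastAtMost'[OF continuous_on_const])
    show "\<bar>Sigma m\<bar> \<le> Sigma 0 * exp (Delta l)" if "0 < m" "m \<le> l" for m
      using Sigma_nonneg[of m] Sigma_le_exp_Delta[of m l] that by simp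
  qed measurable
  have "set_integrable lborel {0..l} (\<lambda>m. Sigma m - excess m)"
    using Sigma_integrable set_integrable_excess by simp
  then have rderiv_integrable: "set_integrable lborel {0..l} (rderiv F)"
    by (simp add: excess_def)
  have "(LINT m:{0..l}|lborel. (legendre.Ap m - legendre.Am m) / 2) = (LINT m:{0..l}|lborel. Sigma m)"
    using Ap_minus_Am_eq by (intro set_lebesgue_integral_cong) auto
  moreover have "(LINT m:{0..l}|lborel. excess m) = (LINT m:{0..l}|lborel. Sigma m) - (LINT m:{0..l}|lborel. rderiv F m)"
    using Sigma_integrable rderiv_integrable by (simp add: excess_def)
  moreover have "(LINT m:{0..l}|lborel. rderiv F m) = F l - F 0"
    using set_borel_integral_eq_integral(2)[OF rderiv_integrable] integral_rderiv[OF convex_F mono_F l] by simp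
  ultimately show ?thesis
    by (simp add: legendre.C_def)
qed

lemma F_eq_Gamma_H_\<phi>p:
  assumes "0 \<le> l"
  shows "ereal (F l) = ereal (LINT m:{0..l}|lborel. (legendre.Ap m - legendre.Am m) / 2)
    + legendre.H (\<phi>p l) - ereal (\<phi>p l * legendre.Ap l)"
  using F_eq_Gamma_minus_C[OF assms] legendre.H_at_\<phi>p[OF assms] by simp

lemma F_eq_Gamma_H_\<phi>m:
  assumes "0 \<le> l"
  shows "ereal (F l) = ereal (LINT m:{0..l}|lborel. (legendre.Ap m - legendre.Am m) / 2)
    + legendre.H (\<phi>m l) - ereal (\<phi>m l * legendre.Am l)"
  using F_eq_Gamma_minus_C[OF assms] legendre.H_at_\<phi>m[OF assms] by simp

end

theorem lemma2p5:
  fixes \<phi>p \<phi>m F :: "real \<Rightarrow> real" and \<nu> :: "real measure"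
    and \<Delta> \<Sigma> \<delta> Ap Am C \<Gamma> \<psi>p \<psi>m :: "real \<Rightarrow> real" and H :: "real \<Rightarrow> ereal"
  assumes phip_mono: "mono_on {0..} \<phi>p" and phip_nonneg: "\<forall>l\<ge>0. 0 \<le> \<phi>p l"
    and phim_anti: "antimono_on {0..} \<phi>m" and phim_nonpos: "\<forall>l\<ge>0. \<phi>m l \<le> 0"
    and F_convex: "convex_on {0..} F" and F_mono: "mono_on {0..} F"
    and Delta_finite: "\<forall>l>0. (\<integral>\<^sup>+ m \<in> {0..l}. (inverse (2 * ennreal (\<phi>p m))
                                  + inverse (2 * ennreal \<bar>\<phi>m m\<bar>)) \<partial>lborel) < \<infinity>"
    and Delta_def: "\<Delta> \<equiv> \<lambda>l. enn2real (\<integral>\<^sup>+ m \<in> {0..l}. (inverse (2 * ennreal (\<phi>p m))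
                                  + inverse (2 * ennreal \<bar>\<phi>m m\<bar>)) \<partial>lborel)"
    and Delta_lim: "filterlim \<Delta> at_top at_top"
    and psip_def: "\<psi>p \<equiv> \<lambda>x. Inf {l. 0 \<le> l \<and> x < \<phi>p l}"
    and psim_def: "\<psi>m \<equiv> \<lambda>x. Inf {l. 0 \<le> l \<and> \<phi>m l \<le> x}"
    and nu_prob: "prob_space \<nu>" and nu_sets: "sets \<nu> = sets borel"
    and nu_tail: "\<forall>l\<ge>0. measure \<nu> {l..} = exp (- \<Delta> l)"
    and F'_integrable: "set_integrable \<nu> {0..} (rderiv F)"
    and Sigma_def: "\<Sigma> \<equiv> \<lambda>l. (\<integral>m\<in>{l..}. rderiv F m \<partial>\<nu>) / measure \<nu> {l..}"
    and delta_def: "\<delta> \<equiv> \<lambda>l. \<Sigma> l - rderiv F l"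
    and Ap_def: "Ap \<equiv> \<lambda>l. \<Sigma> 0 + (\<integral>m\<in>{0..l}. \<delta> m / \<phi>p m \<partial>lborel)"
    and Am_def: "Am \<equiv> \<lambda>l. - \<Sigma> 0 - (\<integral>m\<in>{0..l}. \<delta> m / \<bar>\<phi>m m\<bar> \<partial>lborel)"
    and C_def: "C \<equiv> \<lambda>l. - F 0 + (\<integral>m\<in>{0..l}. \<delta> m \<partial>lborel)"
    and H_def: "H \<equiv> \<lambda>x. if x > 0 then (SUP l\<in>{0<..}. ereal (x * Ap l - C l))
                      else if x = 0 then ereal (F 0)
                      else (SUP l\<in>{0<..}. ereal (x * Am l - C l))"
    and Gamma_def: "\<Gamma> \<equiv> \<lambda>l. (\<integral>m\<in>{0..l}. (Ap m - Am m) / 2 \<partial>lborel)"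
  shows "ereal_convex_on UNIV H
    \<and> (\<forall>x>0. if (\<exists>l\<ge>0. x < \<phi>p l)
               then H x = ereal (x * Ap (\<psi>p x) - C (\<psi>p x))
               else ((\<lambda>l. ereal (x * Ap l - C l)) \<longlongrightarrow> H x) at_top)
    \<and> (\<forall>x<0. if (\<exists>l\<ge>0. \<phi>m l \<le> x)
               then H x = ereal (x * Am (\<psi>m x) - C (\<psi>m x))
               else ((\<lambda>l. ereal (x * Am l - C l)) \<longlongrightarrow> H x) at_top)
    \<and> (\<forall>l\<ge>0. ereal (Ap l) \<le> ereal_right_deriv H (Lim (at_right l) \<phi>p)
             \<and> ereal_left_deriv H (Lim (at_right l) \<phi>m) \<le> ereal (Am l))
    \<and> (\<forall>l>0. ereal_left_deriv H (Lim (at_left l) \<phi>p) \<le> ereal (Ap l)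
             \<and> ereal (Am l) \<le> ereal_right_deriv H (Lim (at_left l) \<phi>m))
    \<and> (\<forall>l\<ge>0. ereal (F l) = ereal (\<Gamma> l) + H (\<phi>p l) - ereal (\<phi>p l * Ap l)
             \<and> ereal (F l) = ereal (\<Gamma> l) + H (\<phi>m l) - ereal (\<phi>m l * Am l))"
proof -
  have phi: "phi_pair \<phi>p \<phi>m"
    using phip_mono phip_nonneg phim_anti phim_nonpos Delta_finite by unfold_locales auto
  have Delta_eq: "\<Delta> = phi_pair.Delta \<phi>p \<phi>m"
    unfolding Delta_def phi_pair.Delta_def[OF phi, abs_def] ..
  interpret T: tail_setting \<phi>p \<phi>m F \<nu>
    using phi Delta_lim F_convex F_mono nu_prob nu_sets nu_tail F'_integrable unfolding Delta_eq
    by (intro tail_setting.intro phi_pair_unbounded.intro phi_pair_unbounded_axioms.intro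
        tail_setting_axioms.intro) auto
  have Ap_eq: "Ap = T.legendre.Ap" and Am_eq: "Am = T.legendre.Am" and C_eq: "C = T.legendre.C"
    unfolding T.legendre.Ap_def[abs_def] T.legendre.Am_def[abs_def] T.legendre.C_def[abs_def]
    unfolding Ap_def Am_def C_def delta_def Sigma_def T.excess_def[abs_def] T.Sigma_def[abs_def]
    by (rule refl)+
  have H_eq: "H = T.legendre.H"
    unfolding H_def Ap_eq Am_eq C_eq T.legendre.H_def[abs_def] ..
  show ?thesis
    unfolding H_eq Ap_eq Am_eq C_eq Gamma_def psip_def psim_def
    by (intro conjI allI impI;
        rule T.legendre.ereal_convex_H T.legendre.H_at_Inf_or_tendsto_plus
          T.legendre.H_at_Inf_or_tendsto_minus T.legendre.Ap_le_ereal_right_deriv_H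
          T.legendre.ereal_left_deriv_H_le_Am T.legendre.ereal_left_deriv_H_le_Ap
          T.legendre.Am_le_ereal_right_deriv_H T.F_eq_Gamma_H_\<phi>p T.F_eq_Gamma_H_\<phi>m;
        assumption)
qed

end
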